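(* Let $H:[0,T]\times\mathbb{R}^N\times\mathbb{R}^N\to\mathbb{R}$ satisfy condition (A) (see context). Then there exist functions $f:[0,T]\times\mathbb{R}^N\times\mathbb{B}\to\mathbb{R}^N$ and $l:[0,T]\times\mathbb{R}^N\times\mathbb{B}\to\mathbb{R}$, where $\mathbb{B}$ is the closed unit ball in $\mathbb{R}^{N+1}$, such that $H(t,x,p)=\sup_{a\in\mathbb{B}}\{\langle p,f(t,x,a)\rangle-l(t,x,a)\}$ for all $t,x,p$, and (R1) $f$ and $l$ are continuous; (R2) for every $R\geq0$ there is an integrable $K_R:[0,T]\to[0,\infty)$ with $|f(t,x,a)-f(t,y,a)|+|l(t,x,a)-l(t,y,a)|\leq K_R(t)|x-y|$ for all $x,y\in\mathbb{B}_R$, $a\in\mathbb{B}$ and a.e. $t\in[0,T]$; (R3) there is an integrable $C:[0,T]\to[0,\infty)$ with $|f(t,x,a)|+|l(t,x,a)|\leq C(t)(1+|x|)$ for all $x\in\mathbb{R}^N$, $a\in\mathbb{B}$ and a.e. $t\in[0,T]$.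
   Context: $\mathbb{B}_R$ is the closed ball of radius $R$ centered at $0$; $\|W\|:=\sup_{\xi\in W}|\xi|$; $H^*(t,x,v)=\sup_p\{\langle v,p\rangle-H(t,x,p)\}$ and $\mathrm{dom}\,H^*(t,x,\cdot)=\{v:H^*(t,x,v)\neq\pm\infty\}$. Conditions: (H1) $H$ continuous in all variables. (H2) $H(t,x,\cdot)$ convex. (H3) for every $R\geq0$ there is $C_R\geq0$ with $|H(t,x,p)-H(t,x,q)|\leq C_R|p-q|$ for $t\in[0,T]$, $x\in\mathbb{B}_R$, all $p,q$. (H4) there is an integrable $c\geq0$ with $|H(t,x,p)-H(t,x,q)|\leq c(t)(1+|x|)|p-q|$ for a.e. $t$, all $x,p,q$. (H5) for every $R\geq0$ there is an integrable $k_R\geq0$ with $|H(t,x,p)-H(t,y,p)|\leq k_R(t)(1+|p|)|x-y|$ for $x,y\in\mathbb{B}_R$, all $p$, a.e. $t$. Condition (A): $H$ satisfies (H1)–(H5) and there is a continuous $\lambda:[0,T]\times\mathbb{R}^N\to[0,\infty)$ with $\|\mathrm{dom}\,H^*(t,x,\cdot)\|\leq\lambda(t,x)$ and $\|H^*(t,x,\mathrm{dom}\,H^*(t,x,\cdot))\|\leq\lambda(t,x)$ for all $t,x$; for every $R\geq0$ there is an integrable $\zeta_R\geq 0$ such that $\lambda(t,\cdot)$ is $\zeta_R(t)$-Lipschitz on $\mathbb{B}_R$ for a.e. $t$; and there is an integrable $\vartheta\geq0$ with $\lambda(t,x)\leq\vartheta(t)(1+|x|)$ for all $x$ and a.e.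 $t$. *)

theory Defs
  imports "HOL-Analysis.Analysis"
begin

text \<open>R^N is modelled by a euclidean_space type 'a; R^(N+1) by 'a \<times> real
  (Euclidean norm). Functions are total but conditions only concern t in [0,T].\<close>

definition Hstar :: "(real \<Rightarrow> 'a::euclidean_space \<Rightarrow> 'a \<Rightarrow> real) \<Rightarrow> real \<Rightarrow> 'a \<Rightarrow> 'a \<Rightarrow> ereal" where
  "Hstar H t x v = (SUP p. ereal (inner v p - H t x p))"

definition domHstar :: "(real \<Rightarrow> 'a::euclidean_space \<Rightarrow> 'a \<Rightarrow> real) \<Rightarrow> real \<Rightarrow> 'a \<Rightarrow> 'a set" where
  "domHstar H t x = {v. Hstar H t x v \<noteq> \<infinity> \<and> Hstar H t x v \<noteq> -\<infinity>}"

definition int_nonneg :: "real \<Rightarrow> (real \<Rightarrow> real) \<Rightarrow> bool" where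
  "int_nonneg T c \<longleftrightarrow> c integrable_on {0..T} \<and> (\<forall>t\<in>{0..T}. c t \<ge> 0)"

definition H1 :: "real \<Rightarrow> (real \<Rightarrow> 'a::euclidean_space \<Rightarrow> 'a \<Rightarrow> real) \<Rightarrow> bool" where
  "H1 T H \<longleftrightarrow> continuous_on ({0..T} \<times> UNIV \<times> UNIV) (\<lambda>(t, x, p). H t x p)"

definition H2 :: "real \<Rightarrow> (real \<Rightarrow> 'a::euclidean_space \<Rightarrow> 'a \<Rightarrow> real) \<Rightarrow> bool" where
  "H2 T H \<longleftrightarrow> (\<forall>t\<in>{0..T}. \<forall>x. convex_on UNIV (H t x))"

definition H3 :: "real \<Rightarrow> (real \<Rightarrow> 'a::euclidean_space \<Rightarrow> 'a \<Rightarrow> real) \<Rightarrow> bool" where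
  "H3 T H \<longleftrightarrow> (\<forall>R\<ge>0. \<exists>C\<ge>0. \<forall>t\<in>{0..T}. \<forall>x\<in>cball 0 R. \<forall>p q.
      \<bar>H t x p - H t x q\<bar> \<le> C * norm (p - q))"

definition H4 :: "real \<Rightarrow> (real \<Rightarrow> 'a::euclidean_space \<Rightarrow> 'a \<Rightarrow> real) \<Rightarrow> bool" where
  "H4 T H \<longleftrightarrow> (\<exists>c. int_nonneg T c \<and> (AE t in lebesgue. t \<in> {0..T} \<longrightarrow>
      (\<forall>x p q. \<bar>H t x p - H t x q\<bar> \<le> c t * (1 + norm x) * norm (p - q))))"

definition H5 :: "real \<Rightarrow> (real \<Rightarrow> 'a::euclidean_space \<Rightarrow> 'a \<Rightarrow> real) \<Rightarrow> bool" where
  "H5 T H \<longleftrightarrow> (\<forall>R\<ge>0. \<exists>k. int_nonneg T k \<and> (AE t in lebesgue. t \<in> {0..T} \<longrightarrow>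
      (\<forall>x\<in>cball 0 R. \<forall>y\<in>cball 0 R. \<forall>p. \<bar>H t x p - H t y p\<bar> \<le> k t * (1 + norm p) * norm (x - y))))"

definition condA :: "real \<Rightarrow> (real \<Rightarrow> 'a::euclidean_space \<Rightarrow> 'a \<Rightarrow> real) \<Rightarrow> bool" where
  "condA T H \<longleftrightarrow> H1 T H \<and> H2 T H \<and> H3 T H \<and> H4 T H \<and> H5 T H \<and>
    (\<exists>lam::real \<Rightarrow> 'a \<Rightarrow> real.
       continuous_on ({0..T} \<times> UNIV) (\<lambda>(t, x). lam t x) \<and>
       (\<forall>t\<in>{0..T}. \<forall>x. lam t x \<ge> 0) \<and>
       (\<forall>t\<in>{0..T}. \<forall>x. \<forall>v\<in>domHstar H t x.
          norm v \<le> lam t x \<and> \<bar>real_of_ereal (Hstar H t x v)\<bar> \<le> lam t x) \<and>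
       (\<forall>R\<ge>0. \<exists>zeta. int_nonneg T zeta \<and> (AE t in lebesgue. t \<in> {0..T} \<longrightarrow>
          (\<forall>x\<in>cball 0 R. \<forall>y\<in>cball 0 R. \<bar>lam t x - lam t y\<bar> \<le> zeta t * norm (x - y)))) \<and>
       (\<exists>theta. int_nonneg T theta \<and> (AE t in lebesgue. t \<in> {0..T} \<longrightarrow>
          (\<forall>x. lam t x \<le> theta t * (1 + norm x)))))"

end

theory Submission
  imports Defs
begin

(* By condition (A), for fixed t and x the conjugate H^*(t,x,.) has its domain in the ball of
   radius lambda(t,x) and is bounded by lambda(t,x) there.  Hence H(t,x,.) is the supremum of the
   affine functions p |-> <v,p> - r over the compact convex set E(t,x) of pairs (v,r) with
   H^*(t,x,v) <= r <= lambda(t,x); this set lies in the ball of radius 2 lambda(t,x) and, by a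
   separation argument, moves in the Hausdorff distance continuously in (t,x) and with the
   Lipschitz moduli of H and lambda in x.  It remains to parametrize E(t,x) by the unit ball:
   the parameter a is sent to a smoothed Steiner point (a selection of compact convex sets that is
   Lipschitz for the Hausdorff distance) of the points of E(t,x) whose distance to y = 2 lambda(t,x) a
   is at most twice dist(y, E(t,x)).  That set is {y} when y lies in E(t,x), so every pair (v,r) is
   attained, and it depends Lipschitz continuously on E(t,x) and y, which gives (R1)-(R3). *)

section \<open>Support functions\<close>

definition support_fun :: "'v::real_inner set \<Rightarrow> 'v \<Rightarrow> real" where
  "support_fun K z = (SUP k\<in>K. inner k z)"

lemma inner_le_radius:
  assumes "K \<subseteq> cball 0 R" "k \<in> K"
  shows "\<bar>inner k z\<bar> \<le> R * norm z"
proof -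
  have "\<bar>inner k z\<bar> \<le> norm k * norm z" by (rule Cauchy_Schwarz_ineq2)
  also have "\<dots> \<le> R * norm z" by (intro mult_right_mono) (use assms in auto)
  finally show ?thesis .
qed

lemma bounded_subset_cball_0:
  fixes K :: "'v::real_normed_vector set"
  assumes "bounded K"
  obtains R where "K \<subseteq> cball 0 R"
proof -
  obtain a where "\<forall>x\<in>K. norm x \<le> a" using assms unfolding bounded_iff by blast
  then show thesis by (intro that[of a]) auto
qed

lemma support_fun_upper:
  assumes "bounded K" "k \<in> K"
  shows "inner k z \<le> support_fun K z"
proof -
  obtain R where R: "K \<subseteq> cball 0 R" using assms(1) by (rule bounded_subset_cball_0)
  have "inner k' z \<le> R * norm z" if "k' \<in> K" for k'
    using inner_le_radius[OF R that, of z] by linarith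
  then have "bdd_above ((\<lambda>k. inner k z) ` K)" by (rule bdd_aboveI2)
  then show ?thesis unfolding support_fun_def by (rule cSUP_upper[OF assms(2)])
qed

lemma support_fun_least: "K \<noteq> {} \<Longrightarrow> (\<And>k. k \<in> K \<Longrightarrow> inner k z \<le> c) \<Longrightarrow> support_fun K z \<le> c"
  unfolding support_fun_def by (rule cSUP_least)

lemma abs_support_fun_le:
  assumes "K \<noteq> {}" "K \<subseteq> cball 0 R"
  shows "\<bar>support_fun K z\<bar> \<le> R * norm z"
proof -
  have K: "bounded K" using assms(2) bounded_cball bounded_subset by blast
  obtain k where k: "k \<in> K" using assms(1) by blast
  have "inner k' z \<le> R * norm z" if "k' \<in> K" for k'
    using inner_le_radius[OF assms(2) that, of z] by linarith
  then have "support_fun K z \<le> R * norm z" by (rule support_fun_least[OF assms(1)])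
  moreover have "- (R * norm z) \<le> support_fun K z"
    using inner_le_radius[OF assms(2) k, of z] support_fun_upper[OF K k, of z] by linarith
  ultimately show ?thesis by linarith
qed

lemma support_fun_add_le:
  assumes "K \<noteq> {}" "bounded K"
  shows "support_fun K (z + w) \<le> support_fun K z + support_fun K w"
proof (rule support_fun_least[OF assms(1)])
  fix k assume "k \<in> K"
  then show "inner k (z + w) \<le> support_fun K z + support_fun K w"
    using support_fun_upper[OF assms(2), of k z] support_fun_upper[OF assms(2), of k w]
    by (simp add: inner_add_right)
qed

lemma support_fun_scaleR_le:
  assumes "K \<noteq> {}" "bounded K" "0 \<le> h"
  shows "support_fun K (h *\<^sub>R w) \<le> h * support_fun K w"
proof (rule support_fun_least[OF assms(1)])
  fix k assume "k \<in> K"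
  then show "inner k (h *\<^sub>R w) \<le> h * support_fun K w"
    using support_fun_upper[OF assms(2), of k w] assms(3) by (simp add: mult_left_mono)
qed

lemma abs_support_fun_diff_le:
  assumes "K \<noteq> {}" "K \<subseteq> cball 0 R"
  shows "\<bar>support_fun K z - support_fun K z'\<bar> \<le> R * norm (z - z')"
proof -
  have K: "bounded K" using assms(2) bounded_cball bounded_subset by blast
  have "support_fun K z \<le> support_fun K z' + R * norm (z - z')"
    using support_fun_add_le[OF assms(1) K, of z' "z - z'"] abs_support_fun_le[OF assms, of "z - z'"]
    by simp
  moreover have "support_fun K z' \<le> support_fun K z + R * norm (z - z')"
    using support_fun_add_le[OF assms(1) K, of z "z' - z"] abs_support_fun_le[OF assms, of "z' - z"]
    by (simp add: norm_minus_commute)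
  ultimately show ?thesis by linarith
qed

lemma continuous_on_support_fun:
  assumes "K \<noteq> {}" "bounded K"
  shows "continuous_on UNIV (support_fun K)"
proof -
  obtain R where R: "K \<subseteq> cball 0 R" using assms(2) by (rule bounded_subset_cball_0)
  then have "0 \<le> R" using assms(1) by (auto simp: subset_iff) (meson norm_ge_zero order_trans)
  then have "lipschitz_on R UNIV (support_fun K)"
    by (intro lipschitz_onI) (use abs_support_fun_diff_le[OF assms(1) R] in \<open>auto simp: dist_norm\<close>)
  then show ?thesis by (rule lipschitz_on_continuous_on)
qed

definition hausdorff_close :: "'v::metric_space set \<Rightarrow> 'v set \<Rightarrow> real \<Rightarrow> bool" where
  "hausdorff_close K L d \<longleftrightarrow>
     (\<forall>k\<in>K. \<exists>l\<in>L. dist k l \<le> d) \<and> (\<forall>l\<in>L. \<exists>k\<in>K. dist k l \<le> d)"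

lemma hausdorff_close_sym: "hausdorff_close K L d \<Longrightarrow> hausdorff_close L K d"
  unfolding hausdorff_close_def by (auto simp: dist_commute)

lemma hausdorff_close_mono: "hausdorff_close K L d \<Longrightarrow> d \<le> d' \<Longrightarrow> hausdorff_close K L d'"
  unfolding hausdorff_close_def by (meson order_trans)

lemma support_fun_le_hausdorff:
  assumes "K \<noteq> {}" "bounded L" "\<forall>k\<in>K. \<exists>l\<in>L. dist k l \<le> d"
  shows "support_fun K z \<le> support_fun L z + d * norm z"
proof (rule support_fun_least[OF assms(1)])
  fix k assume "k \<in> K"
  then obtain l where l: "l \<in> L" "dist k l \<le> d" using assms(3) by blast
  have "inner k z = inner l z + inner (k - l) z" by (simp add: inner_diff_left)
  also have "inner (k - l) z \<le> norm (k - l) * norm z" by (rule norm_cauchy_schwarz)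
  also have "norm (k - l) * norm z \<le> d * norm z" using l by (simp add: dist_norm mult_right_mono)
  also have "inner l z \<le> support_fun L z" by (rule support_fun_upper[OF assms(2) l(1)])
  finally show "inner k z \<le> support_fun L z + d * norm z" by simp
qed

lemma abs_support_fun_diff_hausdorff:
  assumes "K \<noteq> {}" "L \<noteq> {}" "bounded K" "bounded L" "hausdorff_close K L d"
  shows "\<bar>support_fun K z - support_fun L z\<bar> \<le> d * norm z"
  using support_fun_le_hausdorff[OF assms(1,4), of d z] support_fun_le_hausdorff[OF assms(2,3), of d z]
    assms(5)
  unfolding hausdorff_close_def by (auto simp: dist_commute)

section \<open>A Lipschitz selection of compact convex sets\<close>

definition bump :: "'v::euclidean_space \<Rightarrow> real" where
  "bump z = (max 0 (1 - norm z ^ 2))\<^sup>2"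

definition neg_grad_bump :: "'v::euclidean_space \<Rightarrow> 'v" where
  "neg_grad_bump z = (4 * max 0 (1 - norm z ^ 2)) *\<^sub>R z"

lemma has_real_derivative_max_0_power2:
  "((\<lambda>y::real. (max 0 y)\<^sup>2) has_real_derivative 2 * max 0 y) (at y)"
proof (cases y "0::real" rule: linorder_cases)
  case less
  show ?thesis
  proof (rule has_field_derivative_transform_within_open[where S="{..<0}"])
    show "((\<lambda>y::real. 0) has_real_derivative 2 * max 0 y) (at y)" using less by simp
  qed (use less in \<open>auto simp: max_def\<close>)
next
  case equal
  have "((\<lambda>x::real. max 0 x) \<longlongrightarrow> 0) (at 0)"
    using tendsto_max[OF tendsto_const tendsto_ident_at, of "0::real" 0 UNIV] by simp
  moreover have "\<forall>\<^sub>F x in at (0::real). max 0 x = ((max 0 x)\<^sup>2 - (max 0 0)\<^sup>2) / (x - 0)"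
    by (auto simp: eventually_at_filter power2_eq_square max_def)
  ultimately have "((\<lambda>x. ((max 0 x)\<^sup>2 - (max 0 0)\<^sup>2) / (x - 0)) \<longlongrightarrow> 2 * max 0 (0::real)) (at 0)"
    by (simp add: Lim_transform_eventually)
  then show ?thesis using equal by (simp add: has_field_derivative_iff)
next
  case greater
  show ?thesis
  proof (rule has_field_derivative_transform_within_open[where S="{0<..}"])
    show "((\<lambda>y::real. y\<^sup>2) has_real_derivative 2 * max 0 y) (at y)"
      using greater by (auto intro!: derivative_eq_intros)
  qed (use greater in \<open>auto simp: max_def\<close>)
qed

lemma bump_has_real_derivative:
  "((\<lambda>h. bump (z - h *\<^sub>R w)) has_real_derivative inner (neg_grad_bump z) w) (at 0)"
proof -
  define q where "q h = 1 - (inner z z - 2 * h * inner z w + h\<^sup>2 * inner w w)" for h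
  have "bump (z - h *\<^sub>R w) = (max 0 (q h))\<^sup>2" for h
  proof -
    have "norm (z - h *\<^sub>R w) ^ 2 = inner z z - 2 * h * inner z w + h\<^sup>2 * inner w w"
      unfolding power2_norm_eq_inner
      by (simp add: inner_diff_left inner_diff_right inner_commute algebra_simps power2_eq_square)
    then show ?thesis by (simp add: bump_def q_def)
  qed
  moreover have "(q has_real_derivative 2 * inner z w) (at 0)"
    unfolding q_def by (auto intro!: derivative_eq_intros)
  then have "((\<lambda>h. (max 0 (q h))\<^sup>2) has_real_derivative 2 * max 0 (q 0) * (2 * inner z w)) (at 0)"
    by (rule DERIV_chain2[OF has_real_derivative_max_0_power2])
  moreover have "2 * max 0 (q 0) * (2 * inner z w) = inner (neg_grad_bump z) w"
    by (simp add: neg_grad_bump_def q_def power2_norm_eq_inner)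
  ultimately show ?thesis by simp
qed

lemma bump_nonneg: "0 \<le> bump z"
  by (simp add: bump_def)

lemma max_0_one_minus_norm_power2: "1 \<le> norm z \<Longrightarrow> max 0 (1 - norm z ^ 2) = 0"
  using one_le_power[of "norm z" 2] by linarith

lemma bump_eq_0: "1 \<le> norm z \<Longrightarrow> bump z = 0"
  by (simp add: bump_def max_0_one_minus_norm_power2)

lemma neg_grad_bump_eq_0: "1 \<le> norm z \<Longrightarrow> neg_grad_bump z = 0"
  by (simp add: neg_grad_bump_def max_0_one_minus_norm_power2)

lemma continuous_on_bump: "continuous_on UNIV bump"
  unfolding bump_def by (intro continuous_intros)

lemma continuous_on_neg_grad_bump: "continuous_on UNIV neg_grad_bump"
  unfolding neg_grad_bump_def by (intro continuous_intros)

lemma abs_bump_diff_le: "\<bar>bump a - bump b\<bar> \<le> 2 * (norm a + norm b) * dist a b"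
proof -
  define y where "y = 1 - norm a ^ 2"
  define y' where "y' = 1 - norm b ^ 2"
  have "bump a - bump b = (max 0 y - max 0 y') * (max 0 y + max 0 y')"
    by (simp add: bump_def y_def y'_def power2_eq_square algebra_simps)
  then have "\<bar>bump a - bump b\<bar> = \<bar>max 0 y - max 0 y'\<bar> * \<bar>max 0 y + max 0 y'\<bar>"
    by (simp add: abs_mult)
  also have "\<dots> \<le> \<bar>y - y'\<bar> * 2"
  proof (rule mult_mono)
    show "\<bar>max 0 y - max 0 y'\<bar> \<le> \<bar>y - y'\<bar>" by (simp add: max_def abs_if)
    have "y \<le> 1" "y' \<le> 1" by (simp_all add: y_def y'_def)
    then show "\<bar>max 0 y + max 0 y'\<bar> \<le> 2" by linarith
  qed auto
  also have "y - y' = (norm b - norm a) * (norm a + norm b)"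
    by (simp add: y_def y'_def power2_eq_square algebra_simps)
  then have "\<bar>y - y'\<bar> = \<bar>norm b - norm a\<bar> * (norm a + norm b)"
    by (simp add: abs_mult)
  also have "\<dots> \<le> dist a b * (norm a + norm b)"
    by (intro mult_right_mono) (auto simp: dist_norm, metis norm_minus_commute norm_triangle_ineq3)
  finally show ?thesis by (simp add: algebra_simps)
qed

lemma abs_bump_diff_quotient_le:
  assumes "0 < h" "h * norm w \<le> 1"
  shows "\<bar>(bump (z - h *\<^sub>R w) - bump z) / h\<bar> \<le> indicator (cball 0 2) z * (10 * norm w)"
proof (cases "norm z \<le> 2")
  case True
  have "norm (z - h *\<^sub>R w) \<le> norm z + h * norm w"
    using norm_triangle_ineq4[of z "h *\<^sub>R w"] assms(1) by simp
  then have "norm (z - h *\<^sub>R w) + norm z \<le> 5" using True assms(2) by linarith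
  moreover have "\<bar>bump (z - h *\<^sub>R w) - bump z\<bar> \<le> 2 * (norm (z - h *\<^sub>R w) + norm z) * (h * norm w)"
    using abs_bump_diff_le[of "z - h *\<^sub>R w" z] assms(1) by (simp add: dist_norm)
  ultimately have "\<bar>bump (z - h *\<^sub>R w) - bump z\<bar> \<le> 2 * 5 * (h * norm w)"
    by (smt (verit) assms(1) mult_right_mono norm_ge_zero zero_le_mult_iff)
  then show ?thesis using True assms(1) by (simp add: abs_divide divide_le_eq mult.commute)
next
  case False
  have "norm z - h * norm w \<le> norm (z - h *\<^sub>R w)"
    using norm_triangle_ineq2[of z "h *\<^sub>R w"] assms(1) by simp
  then have "bump (z - h *\<^sub>R w) = 0" using False assms(2) by (intro bump_eq_0) linarith
  moreover have "bump z = 0" using False by (intro bump_eq_0) simp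
  ultimately show ?thesis by simp
qed

lemma integrable_mult_bump:
  fixes s :: "'v::euclidean_space \<Rightarrow> real"
  assumes "continuous_on UNIV s"
  shows "integrable lborel (\<lambda>z. s z * bump (z - c))"
proof -
  have "(\<lambda>z. indicator (cball c 1) z *\<^sub>R (s z * bump (z - c))) = (\<lambda>z. s z * bump (z - c))"
    by (auto simp: fun_eq_iff indicator_def bump_eq_0 dist_norm norm_minus_commute)
  moreover have "integrable lborel (\<lambda>z. indicator (cball c 1) z *\<^sub>R (s z * bump (z - c)))"
    by (rule borel_integrable_compact) (auto intro!: continuous_intros
        continuous_on_subset[OF assms] continuous_on_compose2[OF continuous_on_bump])
  ultimately show ?thesis by metis
qed

lemma integrable_scaleR_neg_grad_bump:
  fixes s :: "'v::euclidean_space \<Rightarrow> real"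
  assumes "continuous_on UNIV s"
  shows "integrable lborel (\<lambda>z. s z *\<^sub>R neg_grad_bump z)"
proof -
  have "(\<lambda>z. indicator (cball 0 1) z *\<^sub>R (s z *\<^sub>R neg_grad_bump z)) = (\<lambda>z. s z *\<^sub>R neg_grad_bump z)"
    using neg_grad_bump_eq_0 by (force simp: fun_eq_iff indicator_def)
  moreover have "integrable lborel (\<lambda>z. indicator (cball 0 1) z *\<^sub>R (s z *\<^sub>R neg_grad_bump z))"
    by (rule borel_integrable_compact) (auto intro!: continuous_intros
        continuous_on_subset[OF assms] continuous_on_subset[OF continuous_on_neg_grad_bump])
  ultimately show ?thesis by metis
qed

lemma integral_mult_bump_translate:
  fixes s :: "'v::euclidean_space \<Rightarrow> real"
  assumes "continuous_on UNIV s"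
  shows "(\<integral>z. s z * bump (z - c) \<partial>lborel) = (\<integral>z. s (z + c) * bump z \<partial>lborel)"
proof -
  have [measurable]: "s \<in> borel_measurable borel" "bump \<in> borel_measurable (borel :: 'v measure)"
    using assms continuous_on_bump by (auto intro: borel_measurable_continuous_onI)
  have "(\<integral>z. s z * bump (z - c) \<partial>lborel) = (\<integral>z. s z * bump (z - c) \<partial>distr lborel borel ((+) c))"
    by (simp add: lborel_distr_plus)
  also have "\<dots> = (\<integral>z. s (c + z) * bump (c + z - c) \<partial>lborel)"
    by (rule integral_distr) auto
  finally show ?thesis by (simp add: add.commute)
qed

text \<open>Translation invariance of Lebesgue measure moves the difference quotient from the bump onto \<open>s\<close>.\<close>

lemma integral_mult_bump_diff_quotient:
  fixes s :: "'v::euclidean_space \<Rightarrow> real"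
  assumes s: "continuous_on UNIV s"
  shows "(\<integral>z. s z * ((bump (z - h *\<^sub>R w) - bump z) / h) \<partial>lborel)
       = (\<integral>z. (s (z + h *\<^sub>R w) - s z) / h * bump z \<partial>lborel)"
proof -
  have s': "continuous_on UNIV (\<lambda>z. s (z + h *\<^sub>R w))"
    by (rule continuous_on_compose2[OF s]) (auto intro!: continuous_intros)
  note integrable = integrable_mult_bump[OF s] integrable_mult_bump[OF s, of 0]
    integrable_mult_bump[OF s', of 0]
  have "(\<integral>z. s z * ((bump (z - h *\<^sub>R w) - bump z) / h) \<partial>lborel)
      = ((\<integral>z. s z * bump (z - h *\<^sub>R w) \<partial>lborel) - (\<integral>z. s z * bump z \<partial>lborel)) / h"
    using integrable by (simp add: right_diff_distrib diff_divide_distrib)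
  also have "(\<integral>z. s z * bump (z - h *\<^sub>R w) \<partial>lborel) = (\<integral>z. s (z + h *\<^sub>R w) * bump z \<partial>lborel)"
    by (rule integral_mult_bump_translate[OF s])
  also have "((\<integral>z. s (z + h *\<^sub>R w) * bump z \<partial>lborel) - (\<integral>z. s z * bump z \<partial>lborel)) / h
      = (\<integral>z. (s (z + h *\<^sub>R w) - s z) / h * bump z \<partial>lborel)"
    using integrable by (simp add: left_diff_distrib diff_divide_distrib)
  finally show ?thesis .
qed

lemma tendsto_integral_mult_bump_diff_quotient:
  fixes s :: "'v::euclidean_space \<Rightarrow> real"
  assumes s: "continuous_on UNIV s"
    and h: "\<And>n. 0 < h n" "\<And>n. h n * norm w \<le> 1" "h \<longlonglongrightarrow> 0"
  shows "(\<lambda>n. \<integral>z. s z * ((bump (z - h n *\<^sub>R w) - bump z) / h n) \<partial>lborel)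
     \<longlonglongrightarrow> (\<integral>z. s z * inner (neg_grad_bump z) w \<partial>lborel)"
proof (rule integral_dominated_convergence
    [where w = "\<lambda>z. indicator (cball 0 2) z *\<^sub>R (\<bar>s z\<bar> * (10 * norm w))"])
  have [measurable]: "s \<in> borel_measurable borel"
    using s by (rule borel_measurable_continuous_onI)
  have [measurable]: "bump \<in> borel_measurable (borel :: 'v measure)"
    "neg_grad_bump \<in> borel_measurable (borel :: 'v measure)"
    using continuous_on_bump continuous_on_neg_grad_bump by (auto intro: borel_measurable_continuous_onI)
  show "(\<lambda>z. s z * inner (neg_grad_bump z) w) \<in> borel_measurable lborel"
    "(\<lambda>z. s z * ((bump (z - h n *\<^sub>R w) - bump z) / h n)) \<in> borel_measurable lborel" for n
    by measurable
  show "integrable lborel (\<lambda>z. indicator (cball 0 2) z *\<^sub>R (\<bar>s z\<bar> * (10 * norm w)))"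
    by (rule borel_integrable_compact) (auto intro!: continuous_intros continuous_on_subset[OF s])
  show "AE z in lborel. (\<lambda>n. s z * ((bump (z - h n *\<^sub>R w) - bump z) / h n))
      \<longlonglongrightarrow> s z * inner (neg_grad_bump z) w"
  proof (rule AE_I2, rule tendsto_mult[OF tendsto_const])
    fix z :: 'v
    have "((\<lambda>y. (bump (z - y *\<^sub>R w) - bump (z - 0 *\<^sub>R w)) / (y - 0)) \<longlongrightarrow> inner (neg_grad_bump z) w) (at 0)"
      using bump_has_real_derivative[of z w] by (simp add: has_field_derivative_iff)
    moreover have "\<forall>n. h n \<in> UNIV - {0}" using h(1) by (metis DiffI UNIV_I less_irrefl singletonD)
    ultimately have "((\<lambda>y. (bump (z - y *\<^sub>R w) - bump (z - 0 *\<^sub>R w)) / (y - 0)) \<circ> h)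
        \<longlonglongrightarrow> inner (neg_grad_bump z) w"
      using h(3) unfolding tendsto_at_iff_sequentially by blast
    then show "(\<lambda>n. (bump (z - h n *\<^sub>R w) - bump z) / h n) \<longlonglongrightarrow> inner (neg_grad_bump z) w"
      by (simp add: o_def)
  qed
  show "AE z in lborel. norm (s z * ((bump (z - h n *\<^sub>R w) - bump z) / h n))
      \<le> indicator (cball 0 2) z *\<^sub>R (\<bar>s z\<bar> * (10 * norm w))" for n
  proof (rule AE_I2)
    fix z :: 'v
    have "norm (s z * ((bump (z - h n *\<^sub>R w) - bump z) / h n))
        = \<bar>s z\<bar> * \<bar>(bump (z - h n *\<^sub>R w) - bump z) / h n\<bar>"
      by (simp only: real_norm_def abs_mult)
    also have "\<dots> \<le> \<bar>s z\<bar> * (indicator (cball 0 2) z * (10 * norm w))"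
      by (intro mult_left_mono abs_bump_diff_quotient_le h) simp
    finally show "norm (s z * ((bump (z - h n *\<^sub>R w) - bump z) / h n))
        \<le> indicator (cball 0 2) z *\<^sub>R (\<bar>s z\<bar> * (10 * norm w))"
      by (simp add: algebra_simps)
  qed
qed

lemma integral_bump_pos: "0 < (\<integral>z. bump z \<partial>(lborel :: 'v::euclidean_space measure))"
proof -
  have "(\<integral>z. (9/16::real) * indicator (cball (0::'v) (1/2)) z \<partial>lborel) \<le> (\<integral>z. bump (z::'v) \<partial>lborel)"
  proof (rule integral_mono)
    show "integrable lborel (\<lambda>z. (9/16::real) * indicator (cball (0::'v) (1/2)) z)"
      by (intro integrable_mult_right integrable_real_indicator emeasure_bounded_finite) auto
    show "integrable lborel (bump :: 'v \<Rightarrow> real)"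
      using integrable_mult_bump[of "\<lambda>_. 1" 0] by simp
    fix z :: 'v
    show "(9/16::real) * indicator (cball (0::'v) (1/2)) z \<le> bump z"
    proof (cases "norm z \<le> 1/2")
      case True
      then have "norm z ^ 2 \<le> (1/2)^2" by (intro power_mono) auto
      then have "(3/4::real)^2 \<le> (max 0 (1 - norm z ^ 2))^2"
        by (intro power_mono) (auto simp: power2_eq_square)
      then show ?thesis using True by (simp add: bump_def power2_eq_square)
    qed (simp add: bump_nonneg)
  qed
  moreover have "(\<integral>z. (9/16::real) * indicator (cball (0::'v) (1/2)) z \<partial>lborel)
      = 9/16 * measure lborel (cball (0::'v) (1/2))"
    by simp
  moreover have "0 < measure lborel (cball (0::'v) (1/2))" by simp
  ultimately show ?thesis by linarith
qed

text \<open>A smoothed Steiner point: after integration by parts it is the \<open>bump\<close>-weighted mean of the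
  gradient of the support function, and that gradient lies in \<open>K\<close> wherever it exists.\<close>

definition steiner_point :: "'v::euclidean_space set \<Rightarrow> 'v" where
  "steiner_point K =
     (1 / (\<integral>z. bump (z::'v) \<partial>lborel)) *\<^sub>R (\<integral>z. support_fun K z *\<^sub>R neg_grad_bump z \<partial>lborel)"

lemma inner_steiner_point:
  fixes K :: "'v::euclidean_space set"
  assumes "K \<noteq> {}" "bounded K"
  shows "inner (steiner_point K) w
    = (\<integral>z. support_fun K z * inner (neg_grad_bump z) w \<partial>lborel) / (\<integral>z. bump (z::'v) \<partial>lborel)"
proof -
  have "(\<integral>z. support_fun K z * inner (neg_grad_bump z) w \<partial>lborel)
      = (\<integral>z. inner (support_fun K z *\<^sub>R neg_grad_bump z) w \<partial>lborel)"
    by simp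
  also have "\<dots> = inner (\<integral>z. support_fun K z *\<^sub>R neg_grad_bump z \<partial>lborel) w"
    by (intro integral_inner_left integrable_scaleR_neg_grad_bump continuous_on_support_fun assms)
  finally show ?thesis unfolding steiner_point_def by simp
qed

lemma inner_steiner_point_le:
  fixes K :: "'v::euclidean_space set"
  assumes K: "K \<noteq> {}" "bounded K"
  shows "inner (steiner_point K) w \<le> support_fun K w"
proof -
  define h where "h n = 1 / (1 + norm w + real n)" for n :: nat
  have h: "0 < h n" "h n * norm w \<le> 1" for n
    unfolding h_def by (auto simp: divide_le_eq add_pos_nonneg)
  have "h \<longlonglongrightarrow> 0"
    unfolding h_def by (intro tendsto_divide_0[OF tendsto_const] filterlim_at_top_imp_at_infinity
        filterlim_tendsto_add_at_top[OF tendsto_const filterlim_real_sequentially])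
  note lim = tendsto_integral_mult_bump_diff_quotient[OF continuous_on_support_fun[OF K] h this]
  have "(\<integral>z. support_fun K z * ((bump (z - h n *\<^sub>R w) - bump z) / h n) \<partial>lborel)
      \<le> support_fun K w * (\<integral>z. bump (z::'v) \<partial>lborel)" for n
  proof -
    have c: "continuous_on UNIV (\<lambda>z. (support_fun K (z + h n *\<^sub>R w) - support_fun K z) / h n)"
      by (intro continuous_intros continuous_on_compose2[OF continuous_on_support_fun[OF K]])
         (use h(1)[of n] in auto)
    have "(support_fun K (z + h n *\<^sub>R w) - support_fun K z) / h n \<le> support_fun K w" for z
    proof -
      have "support_fun K (z + h n *\<^sub>R w) \<le> support_fun K z + h n * support_fun K w"
        using support_fun_add_le[OF K, of z "h n *\<^sub>R w"] support_fun_scaleR_le[OF K, of "h n" w] h(1)[of n]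
        by simp
      then show ?thesis using h(1)[of n] by (simp add: divide_le_eq mult.commute)
    qed
    then have "(\<integral>z. (support_fun K (z + h n *\<^sub>R w) - support_fun K z) / h n * bump z \<partial>lborel)
        \<le> (\<integral>z. support_fun K w * bump (z::'v) \<partial>lborel)"
      using integrable_mult_bump[OF c, of 0] integrable_mult_bump[of "\<lambda>_. support_fun K w" 0]
      by (intro integral_mono mult_right_mono bump_nonneg) auto
    then show ?thesis
      by (simp only: integral_mult_bump_diff_quotient[OF continuous_on_support_fun[OF K]]
          integral_mult_right_zero)
  qed
  then have "(\<integral>z. support_fun K z * inner (neg_grad_bump z) w \<partial>lborel)
      \<le> support_fun K w * (\<integral>z. bump (z::'v) \<partial>lborel)"
    by (intro LIMSEQ_le_const2[OF lim]) auto
  then show ?thesis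
    using integral_bump_pos[where 'v='v] by (simp add: inner_steiner_point[OF K] divide_le_eq)
qed

lemma steiner_point_mem:
  assumes "compact K" "convex K" "K \<noteq> {}"
  shows "steiner_point K \<in> K"
proof (rule ccontr)
  assume "steiner_point K \<notin> K"
  then obtain a b where ab: "inner a (steiner_point K) < b" "\<forall>x\<in>K. b < inner a x"
    using separating_hyperplane_closed_point[OF assms(2) compact_imp_closed[OF assms(1)]] by blast
  have "support_fun K (-a) \<le> -b"
    by (rule support_fun_least[OF assms(3)]) (use ab(2) in \<open>force simp: inner_commute\<close>)
  moreover have "inner (steiner_point K) (-a) \<le> support_fun K (-a)"
    using inner_steiner_point_le assms compact_imp_bounded by blast
  ultimately show False using ab(1) by (simp add: inner_commute)
qed

lemma steiner_point_singleton: "steiner_point {e} = e"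
  using steiner_point_mem[of "{e}"] by simp

lemma steiner_point_lipschitz:
  obtains C :: real where "0 \<le> C"
    and "\<And>(K :: 'v::euclidean_space set) L d. K \<noteq> {} \<Longrightarrow> L \<noteq> {} \<Longrightarrow> bounded K \<Longrightarrow>
      bounded L \<Longrightarrow> hausdorff_close K L d \<Longrightarrow> dist (steiner_point K) (steiner_point L) \<le> C * d"
proof -
  define P where "P = (\<integral>z. bump z \<partial>(lborel :: 'v measure))"
  define M where "M = (\<integral>z. norm z * norm (neg_grad_bump z) \<partial>(lborel :: 'v measure))"
  have P: "0 < P" unfolding P_def by (rule integral_bump_pos)
  have intM: "integrable lborel (\<lambda>z::'v. norm z * norm (neg_grad_bump z))"
    using integrable_norm[OF integrable_scaleR_neg_grad_bump[of norm]] by (simp add: continuous_on_norm_id)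
  have M: "0 \<le> M" unfolding M_def by (rule integral_nonneg_AE) auto
  show ?thesis
  proof (rule that[of "M / P"])
    show "0 \<le> M / P" using M P by simp
    fix K L :: "'v set" and d
    assume K: "K \<noteq> {}" "bounded K" and L: "L \<noteq> {}" "bounded L" and KL: "hausdorff_close K L d"
    have iK: "integrable lborel (\<lambda>z. support_fun K z *\<^sub>R neg_grad_bump z)"
      and iL: "integrable lborel (\<lambda>z. support_fun L z *\<^sub>R neg_grad_bump z)"
      by (intro integrable_scaleR_neg_grad_bump continuous_on_support_fun K L)+
    have "steiner_point K - steiner_point L
        = (1 / P) *\<^sub>R (\<integral>z. (support_fun K z - support_fun L z) *\<^sub>R neg_grad_bump z \<partial>lborel)"
      using iK iL unfolding steiner_point_def P_def by (simp add: scaleR_diff_right scaleR_diff_left)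
    then have "dist (steiner_point K) (steiner_point L)
        = norm (\<integral>z. (support_fun K z - support_fun L z) *\<^sub>R neg_grad_bump z \<partial>lborel) / P"
      using P by (simp add: dist_norm)
    also have "norm (\<integral>z. (support_fun K z - support_fun L z) *\<^sub>R neg_grad_bump z \<partial>lborel)
        \<le> (\<integral>z. d * (norm (z::'v) * norm (neg_grad_bump z)) \<partial>lborel)"
    proof (rule Bochner_Integration.integral_norm_bound_integral)
      show "integrable lborel (\<lambda>z. (support_fun K z - support_fun L z) *\<^sub>R neg_grad_bump z)"
        using Bochner_Integration.integrable_diff[OF iK iL] by (simp add: scaleR_diff_left)
      show "integrable lborel (\<lambda>z. d * (norm (z::'v) * norm (neg_grad_bump z)))"
        by (intro integrable_mult_right intM)
      show "norm ((support_fun K z - support_fun L z) *\<^sub>R neg_grad_bump z)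
          \<le> d * (norm z * norm (neg_grad_bump z))" for z
        using mult_right_mono[OF abs_support_fun_diff_hausdorff[OF K(1) L(1) K(2) L(2) KL, of z],
            of "norm (neg_grad_bump z)"]
        by simp
    qed
    finally show "dist (steiner_point K) (steiner_point L) \<le> M / P * d"
      using P unfolding M_def by (simp add: divide_right_mono mult.commute)
  qed
qed

text \<open>With the factor \<open>1\<close> this would be the set of nearest points, which is not Lipschitz in \<open>(K, y)\<close>;
  the factor \<open>2\<close> makes it so (\<open>near_part_hausdorff\<close>).\<close>

definition near_part :: "'v::euclidean_space set \<Rightarrow> 'v \<Rightarrow> 'v set" where
  "near_part K y = K \<inter> cball y (2 * infdist y K)"

lemma near_part_subset: "near_part K y \<subseteq> K"
  unfolding near_part_def by blast

lemma near_part_of_mem: "y \<in> K \<Longrightarrow> near_part K y = {y}"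
  unfolding near_part_def by auto

lemma
  assumes "compact K" "convex K" "K \<noteq> {}"
  shows compact_near_part: "compact (near_part K y)"
    and convex_near_part: "convex (near_part K y)"
    and near_part_nonempty: "near_part K y \<noteq> {}"
proof -
  show "compact (near_part K y)" "convex (near_part K y)"
    unfolding near_part_def using assms by (simp_all add: compact_Int_closed convex_Int)
  obtain x where "x \<in> K" "infdist y K = dist y x"
    using infdist_attains_inf[OF compact_imp_closed[OF assms(1)] assms(3)] by blast
  then have "x \<in> near_part K y" unfolding near_part_def by (simp add: infdist_nonneg)
  then show "near_part K y \<noteq> {}" by blast
qed

lemma infdist_le_hausdorff:
  fixes L :: "'v::heine_borel set"
  assumes "closed L" "L \<noteq> {}" "\<forall>l\<in>L. \<exists>k\<in>K. dist k l \<le> d"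
  shows "infdist y K \<le> infdist y L + d"
proof -
  obtain l where l: "l \<in> L" "infdist y L = dist y l"
    using infdist_attains_inf[OF assms(1,2)] by blast
  obtain k where k: "k \<in> K" "dist k l \<le> d" using assms(3) l(1) by blast
  have "infdist y K \<le> dist y k" by (rule infdist_le[OF k(1)])
  also have "\<dots> \<le> dist y l + dist k l" by (metis dist_commute dist_triangle)
  finally show ?thesis using l k by linarith
qed

text \<open>The point \<open>l\<close> is taken on the segment from \<open>l\<^sub>0\<close> to \<open>p\<close>.\<close>

lemma convex_move_into_cball:
  fixes L :: "'v::real_normed_vector set"
  assumes "convex L" "l\<^sub>0 \<in> L" "p \<in> L" "dist p y \<le> r" "2 * r < dist l\<^sub>0 y"
  obtains l where "l \<in> L" "dist l y \<le> 2 * r" "dist l l\<^sub>0 \<le> 3 * (dist l\<^sub>0 y - 2 * r)"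
proof -
  define A where "A = dist l\<^sub>0 y"
  have r: "0 \<le> r" using assms(4) zero_le_dist order_trans by blast
  define \<theta> where "\<theta> = (A - 2 * r) / (A - r)"
  have A: "0 < A - r" using assms(5) r unfolding A_def by linarith
  have \<theta>: "0 \<le> \<theta>" "\<theta> \<le> 1" unfolding \<theta>_def using A assms(5) r by (auto simp: A_def divide_le_eq)
  define l where "l = (1 - \<theta>) *\<^sub>R l\<^sub>0 + \<theta> *\<^sub>R p"
  show ?thesis
  proof (rule that)
    show "l \<in> L" unfolding l_def using assms(1-3) \<theta> by (simp add: convex_def)
    have "l - y = (1 - \<theta>) *\<^sub>R (l\<^sub>0 - y) + \<theta> *\<^sub>R (p - y)"
      unfolding l_def by (simp add: algebra_simps)
    then have "dist l y \<le> (1 - \<theta>) * A + \<theta> * dist p y"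
      using norm_triangle_ineq[of "(1 - \<theta>) *\<^sub>R (l\<^sub>0 - y)" "\<theta> *\<^sub>R (p - y)"] \<theta>
      by (simp add: dist_norm A_def)
    also have "\<dots> \<le> (1 - \<theta>) * A + \<theta> * r" using \<theta> assms(4) by (simp add: mult_left_mono)
    also have "\<dots> = A - \<theta> * (A - r)" by (simp add: algebra_simps)
    also have "\<theta> * (A - r) = A - 2 * r" unfolding \<theta>_def using A by simp
    finally show "dist l y \<le> 2 * r" by simp
    have "dist l l\<^sub>0 = \<theta> * dist p l\<^sub>0"
      unfolding l_def using \<theta> by (simp add: dist_norm algebra_simps flip: scaleR_diff_right)
    also have "\<dots> \<le> \<theta> * (A + r)"
      using dist_triangle[of p l\<^sub>0 y] assms(4) \<theta> unfolding A_def
      by (intro mult_left_mono) (auto simp: dist_commute)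
    also have "\<dots> = (A - 2 * r) * ((A + r) / (A - r))" unfolding \<theta>_def by simp
    also have "\<dots> \<le> (A - 2 * r) * 3"
      using A assms(5) unfolding A_def by (intro mult_left_mono) (auto simp: divide_le_eq)
    finally show "dist l l\<^sub>0 \<le> 3 * (dist l\<^sub>0 y - 2 * r)" by (simp add: A_def)
  qed
qed

lemma near_part_hausdorff_half:
  assumes L: "compact L" "convex L" "L \<noteq> {}"
    and KL: "hausdorff_close K L d" and yy': "dist y y' \<le> d"
  shows "\<forall>k\<in>near_part K y. \<exists>l\<in>near_part L y'. dist k l \<le> 19 * d"
proof
  fix k assume "k \<in> near_part K y"
  then have k: "k \<in> K" "dist k y \<le> 2 * infdist y K" unfolding near_part_def by (auto simp: dist_commute)
  have d: "0 \<le> d" using yy' zero_le_dist order_trans by blast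
  have "infdist y K \<le> infdist y' K + dist y y'" by (rule infdist_triangle)
  also have "infdist y' K \<le> infdist y' L + d"
    using KL by (intro infdist_le_hausdorff compact_imp_closed L) (simp add: hausdorff_close_def)
  finally have "infdist y K \<le> infdist y' L + 2 * d" using yy' by linarith
  obtain l\<^sub>0 where l\<^sub>0: "l\<^sub>0 \<in> L" "dist k l\<^sub>0 \<le> d" using KL k(1) unfolding hausdorff_close_def by blast
  have "dist l\<^sub>0 y' \<le> dist l\<^sub>0 k + dist k y + dist y y'"
    using dist_triangle[of l\<^sub>0 y' y] dist_triangle[of l\<^sub>0 y k] by linarith
  then have A: "dist l\<^sub>0 y' \<le> 2 * infdist y' L + 6 * d"
    using l\<^sub>0(2) k(2) \<open>infdist y K \<le> infdist y' L + 2 * d\<close> yy' by (simp add: dist_commute)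
  show "\<exists>l\<in>near_part L y'. dist k l \<le> 19 * d"
  proof (cases "dist l\<^sub>0 y' \<le> 2 * infdist y' L")
    case True
    then show ?thesis
      using l\<^sub>0 d unfolding near_part_def by (intro bexI[of _ l\<^sub>0]) (auto simp: dist_commute)
  next
    case False
    obtain p where p: "p \<in> L" "dist p y' \<le> infdist y' L"
      using infdist_attains_inf[OF compact_imp_closed[OF L(1)] L(3)] by (metis dist_commute order_refl)
    obtain l where l: "l \<in> L" "dist l y' \<le> 2 * infdist y' L"
        "dist l l\<^sub>0 \<le> 3 * (dist l\<^sub>0 y' - 2 * infdist y' L)"
      using convex_move_into_cball[OF L(2) l\<^sub>0(1) p] False by auto
    have "dist k l \<le> dist k l\<^sub>0 + dist l l\<^sub>0" by (rule dist_triangle2)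
    also have "\<dots> \<le> 19 * d" using l(3) l\<^sub>0(2) A by (simp add: algebra_simps)
    finally show ?thesis using l unfolding near_part_def by (intro bexI[of _ l]) (auto simp: dist_commute)
  qed
qed

lemma near_part_hausdorff:
  assumes K: "compact K" "convex K" "K \<noteq> {}" and L: "compact L" "convex L" "L \<noteq> {}"
    and KL: "hausdorff_close K L d" and yy': "dist y y' \<le> d"
  shows "hausdorff_close (near_part K y) (near_part L y') (19 * d)"
  using near_part_hausdorff_half[OF L KL yy']
    near_part_hausdorff_half[OF K hausdorff_close_sym[OF KL], of y' y] yy'
  unfolding hausdorff_close_def by (auto simp: dist_commute)

section \<open>Affine minorants of convex functions\<close>

definition affine_minorant :: "('a::euclidean_space \<Rightarrow> real) \<Rightarrow> 'a \<Rightarrow> real \<Rightarrow> bool" where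
  "affine_minorant g v r \<longleftrightarrow> (\<forall>p. inner v p - r \<le> g p)"

text \<open>\<open>affine_minorant g v r\<close> says \<open>g\<^sup>* v \<le> r\<close>, so \<open>minorant_set g \<mu>\<close> is the epigraph of the
  conjugate \<open>g\<^sup>*\<close> cut off at height \<open>\<mu>\<close>, and \<open>conj_bounded g \<mu>\<close> says that \<open>dom g\<^sup>* \<subseteq> cball 0 \<mu>\<close>
  and \<open>\<bar>g\<^sup>*\<bar> \<le> \<mu>\<close> on it.\<close>

definition minorant_set :: "('a::euclidean_space \<Rightarrow> real) \<Rightarrow> real \<Rightarrow> ('a \<times> real) set" where
  "minorant_set g \<mu> = {(v, r). affine_minorant g v r \<and> r \<le> \<mu>}"

definition conj_bounded :: "('a::euclidean_space \<Rightarrow> real) \<Rightarrow> real \<Rightarrow> bool" where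
  "conj_bounded g \<mu> \<longleftrightarrow> convex_on UNIV g \<and>
     (\<forall>v r. affine_minorant g v r \<longrightarrow> norm v \<le> \<mu> \<and> - \<mu> \<le> r \<and> affine_minorant g v \<mu>)"

lemma convex_strict_epigraph:
  fixes g :: "'a::real_vector \<Rightarrow> real"
  assumes "convex_on UNIV g"
  shows "convex {(p, s). g p < s}"
proof (rule convexI, clarsimp)
  fix p q :: 'a and s t u v :: real
  assume gp: "g p < s" and gq: "g q < t" and u: "0 \<le> u" and v: "0 \<le> v" and uv: "u + v = 1"
  have "g (u *\<^sub>R p + v *\<^sub>R q) \<le> u * g p + v * g q"
    using convex_onD[OF assms, of v p q] u v uv by (simp add: eq_diff_eq[symmetric])
  also have "\<dots> < u * s + v * t"
  proof (cases "u = 0")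
    case False
    then have "u * g p < u * s" using u gp by simp
    moreover have "v * g q \<le> v * t" using v gq by (simp add: mult_left_mono)
    ultimately show ?thesis by linarith
  qed (use uv gq in simp)
  finally show "g (u *\<^sub>R p + v *\<^sub>R q) < u * s + v * t" .
qed

lemma strict_epigraph_normal_neg:
  fixes g :: "'a::real_inner \<Rightarrow> real"
  assumes "(c, \<gamma>) \<noteq> 0" and below: "\<And>p s. g p < s \<Longrightarrow> inner c p + \<gamma> * s \<le> b"
  shows "\<gamma> < 0"
proof (rule ccontr)
  assume "\<not> \<gamma> < 0"
  then consider "0 < \<gamma>" | "\<gamma> = 0" by linarith
  then show False
  proof cases
    case 1
    define s where "s = max (g 0 + 1) ((\<bar>b\<bar> + 1) / \<gamma>)"
    have "\<gamma> * s \<le> b" using below[of 0 s] unfolding s_def by simp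
    moreover have "\<gamma> * ((\<bar>b\<bar> + 1) / \<gamma>) \<le> \<gamma> * s" unfolding s_def using 1 by (intro mult_left_mono) auto
    ultimately show False using 1 by simp
  next
    case 2
    then have c: "c \<noteq> 0" using assms(1) by (simp add: zero_prod_def)
    define p where "p = ((\<bar>b\<bar> + 1) / (norm c)\<^sup>2) *\<^sub>R c"
    have "inner c p \<le> b" using below[of p "g p + 1"] 2 by simp
    moreover have "inner c p = \<bar>b\<bar> + 1" unfolding p_def using c by (simp add: power2_norm_eq_inner)
    ultimately show False by simp
  qed
qed

lemma separating_affine_minorant:
  fixes g :: "'a::euclidean_space \<Rightarrow> real"
  assumes g: "convex_on UNIV g" and T: "convex T" "T \<noteq> {}"
    and below: "\<And>p s. (p, s) \<in> T \<Longrightarrow> s \<le> g p"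
  obtains a b where "\<And>p. inner a p + b \<le> g p" "\<And>p s. (p, s) \<in> T \<Longrightarrow> s \<le> inner a p + b"
proof -
  have "(0, g 0 + 1) \<in> {(p, s). g p < s}" by simp
  moreover have "{(p, s). g p < s} \<inter> T = {}" using below by force
  ultimately obtain n b where n: "n \<noteq> 0" "\<forall>x\<in>{(p, s). g p < s}. inner n x \<le> b" "\<forall>x\<in>T. b \<le> inner n x"
    using separating_hyperplane_sets[OF convex_strict_epigraph[OF g] T(1) _ T(2)] by blast
  obtain c \<gamma> where n_eq: "n = (c, \<gamma>)" by (cases n)
  have S: "inner c p + \<gamma> * s \<le> b" if "g p < s" for p s using n(2) that unfolding n_eq by auto
  have \<gamma>: "\<gamma> < 0" using n(1) S unfolding n_eq by (rule strict_epigraph_normal_neg)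
  have key: "(b - inner c p) / \<gamma> = inner ((- 1 / \<gamma>) *\<^sub>R c) p + b / \<gamma>" for p
    by (simp add: diff_divide_distrib)
  show ?thesis
  proof (rule that[of "(- 1 / \<gamma>) *\<^sub>R c" "b / \<gamma>", unfolded key[symmetric]])
    fix p
    show "(b - inner c p) / \<gamma> \<le> g p"
    proof (rule ccontr)
      assume "\<not> (b - inner c p) / \<gamma> \<le> g p"
      define X where "X = (b - inner c p) / \<gamma>"
      define s where "s = (g p + X) / 2"
      have "g p < s" "s < X" using \<open>\<not> _ \<le> g p\<close> unfolding s_def X_def[symmetric] by auto
      moreover have "X \<le> s"
        using S[OF \<open>g p < s\<close>] \<gamma> unfolding X_def by (simp add: divide_le_eq algebra_simps)
      ultimately show False by simp
    qed
  next
    fix p s assume "(p, s) \<in> T"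
    then have "b \<le> inner c p + \<gamma> * s" using n(3) unfolding n_eq by auto
    then show "s \<le> (b - inner c p) / \<gamma>" using \<gamma> by (simp add: le_divide_eq algebra_simps)
  qed
qed

lemma convex_on_supporting_affine:
  fixes g :: "'a::euclidean_space \<Rightarrow> real"
  assumes "convex_on UNIV g"
  obtains a b where "\<And>p. inner a p + b \<le> g p" "inner a p\<^sub>0 + b = g p\<^sub>0"
proof -
  obtain a b where "\<And>p. inner a p + b \<le> g p" "g p\<^sub>0 \<le> inner a p\<^sub>0 + b"
    using separating_affine_minorant[OF assms, of "{(p\<^sub>0, g p\<^sub>0)}"] by auto
  then show ?thesis using that by (meson antisym)
qed

lemma minorant_set_le: "(v, r) \<in> minorant_set g \<mu> \<Longrightarrow> inner v p - r \<le> g p"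
  unfolding minorant_set_def affine_minorant_def by auto

lemma minorant_set_attains:
  assumes "conj_bounded g \<mu>"
  obtains v r where "(v, r) \<in> minorant_set g \<mu>" "inner v p - r = g p"
proof -
  obtain a b where ab: "\<And>q. inner a q + b \<le> g q" "inner a p + b = g p"
    using convex_on_supporting_affine assms unfolding conj_bounded_def by blast
  then have m: "affine_minorant g a (- b)" unfolding affine_minorant_def by simp
  then have "affine_minorant g a \<mu>" using assms unfolding conj_bounded_def by blast
  then have "inner a p - \<mu> \<le> g p" unfolding affine_minorant_def by blast
  then have "- b \<le> \<mu>" using ab(2) by linarith
  then show ?thesis using m ab(2) that[of a "- b"] unfolding minorant_set_def by auto
qed

lemma minorant_set_bounds:
  assumes "conj_bounded g \<mu>" "(v, r) \<in> minorant_set g \<mu>"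
  shows "norm v \<le> \<mu>" "- \<mu> \<le> r" "r \<le> \<mu>"
  using assms unfolding conj_bounded_def minorant_set_def by auto

lemma minorant_set_subset_cball:
  assumes "conj_bounded g \<mu>"
  shows "minorant_set g \<mu> \<subseteq> cball 0 (2 * \<mu>)"
proof
  fix e assume "e \<in> minorant_set g \<mu>"
  then show "e \<in> cball 0 (2 * \<mu>)"
    using minorant_set_bounds[OF assms, of "fst e" "snd e"] norm_Pair_le[of "fst e" "snd e"] by simp
qed

lemma
  assumes "conj_bounded g \<mu>"
  shows conj_bounded_nonneg: "0 \<le> \<mu>" and minorant_set_nonempty: "minorant_set g \<mu> \<noteq> {}"
proof -
  obtain v r where "(v, r) \<in> minorant_set g \<mu>" using minorant_set_attains[OF assms] .
  then show "0 \<le> \<mu>" "minorant_set g \<mu> \<noteq> {}" using minorant_set_bounds(2,3)[OF assms] by force+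
qed

lemma convex_minorant_set: "convex (minorant_set g \<mu>)"
proof (rule convexI)
  fix x y :: "'a \<times> real" and u u' :: real
  assume x: "x \<in> minorant_set g \<mu>" and y: "y \<in> minorant_set g \<mu>"
    and u: "0 \<le> u" "0 \<le> u'" "u + u' = 1"
  obtain v r v' r' where xy: "x = (v, r)" "y = (v', r')" by (cases x, cases y)
  have "inner (u *\<^sub>R v + u' *\<^sub>R v') p - (u * r + u' * r') \<le> g p" for p
  proof -
    have "inner (u *\<^sub>R v + u' *\<^sub>R v') p - (u * r + u' * r') = u * (inner v p - r) + u' * (inner v' p - r')"
      by (simp add: inner_add_left algebra_simps)
    also have "\<dots> \<le> u * g p + u' * g p"
      using minorant_set_le[of v r g \<mu> p] minorant_set_le[of v' r' g \<mu> p] x y u(1,2) unfolding xy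
      by (intro add_mono mult_left_mono) auto
    also have "\<dots> = g p" using u(3) by (metis distrib_right mult_1)
    finally show ?thesis .
  qed
  moreover have "u * r + u' * r' \<le> \<mu>"
  proof -
    have "r \<le> \<mu>" "r' \<le> \<mu>" using x y unfolding xy minorant_set_def by auto
    then have "u * r + u' * r' \<le> u * \<mu> + u' * \<mu>" using u by (intro add_mono mult_left_mono) auto
    also have "\<dots> = \<mu>" using u(3) by (metis distrib_right mult_1)
    finally show ?thesis .
  qed
  ultimately show "u *\<^sub>R x + u' *\<^sub>R y \<in> minorant_set g \<mu>"
    unfolding xy minorant_set_def affine_minorant_def by auto
qed

lemma closed_minorant_set: "closed (minorant_set g \<mu>)"
proof -
  have "minorant_set g \<mu> = (\<Inter>p. {e. inner (fst e) p - snd e \<le> g p}) \<inter> {e. snd e \<le> \<mu>}"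
    unfolding minorant_set_def affine_minorant_def by auto
  then show ?thesis by (auto intro!: closed_Int closed_INT closed_Collect_le continuous_intros)
qed

lemma compact_minorant_set:
  assumes "conj_bounded g \<mu>"
  shows "compact (minorant_set g \<mu>)"
proof -
  have "bounded (minorant_set g \<mu>)"
    using minorant_set_subset_cball[OF assms] bounded_cball bounded_subset by blast
  then show ?thesis using closed_minorant_set compact_eq_bounded_closed by blast
qed

lemma conj_bounded_scaleR_diff:
  assumes "conj_bounded g \<mu>" "1 \<le> s"
  shows "\<bar>g (s *\<^sub>R w) - s * g w\<bar> \<le> (s - 1) * \<mu>"
proof -
  obtain v r where vr: "(v, r) \<in> minorant_set g \<mu>" "inner v (s *\<^sub>R w) - r = g (s *\<^sub>R w)"
    using minorant_set_attains[OF assms(1)] .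
  obtain v' r' where vr': "(v', r') \<in> minorant_set g \<mu>" "inner v' w - r' = g w"
    using minorant_set_attains[OF assms(1)] .
  have "g (s *\<^sub>R w) = s * (inner v w - r) + (s - 1) * r" using vr(2) by (simp add: algebra_simps)
  also have "\<dots> \<le> s * g w + (s - 1) * \<mu>"
    using minorant_set_le[OF vr(1), of w] minorant_set_bounds(3)[OF assms(1) vr(1)] assms(2)
    by (intro add_mono mult_left_mono) auto
  finally have "g (s *\<^sub>R w) \<le> s * g w + (s - 1) * \<mu>" .
  moreover have "s * g w + (s - 1) * r' \<le> g (s *\<^sub>R w)"
    using minorant_set_le[OF vr'(1), of "s *\<^sub>R w"] vr'(2) by (simp add: algebra_simps)
  moreover have "(s - 1) * (- \<mu>) \<le> (s - 1) * r'"
    using minorant_set_bounds(2)[OF assms(1) vr'(1)] assms(2) by (intro mult_left_mono) auto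
  ultimately show ?thesis by (simp add: abs_le_iff algebra_simps)
qed

text \<open>If \<open>\<eta> < norm (v - a)\<close>, the left-hand side overtakes the affine function along the ray
  spanned by \<open>v - a\<close>.\<close>

lemma affine_above_cone_slope:
  assumes "0 \<le> \<eta>" "\<And>p. inner v p - c - \<eta> * norm p \<le> inner a p + b"
  shows "norm (v - a) \<le> \<eta>"
proof (rule ccontr)
  define d where "d = v - a"
  assume "\<not> norm (v - a) \<le> \<eta>"
  then have pos: "0 < norm d * (norm d - \<eta>)" using assms(1) unfolding d_def by (intro mult_pos_pos) auto
  define t where "t = (\<bar>b + c\<bar> + 1) / (norm d * (norm d - \<eta>))"
  have t: "0 \<le> t" unfolding t_def using pos by simp
  have "inner v (t *\<^sub>R d) - inner a (t *\<^sub>R d) = t * (norm d)\<^sup>2"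
    unfolding d_def by (simp add: power2_norm_eq_inner inner_diff_left flip: right_diff_distrib)
  then have "t * (norm d)\<^sup>2 - \<eta> * (t * norm d) \<le> b + c"
    using assms(2)[of "t *\<^sub>R d"] t by simp
  then have "t * (norm d * (norm d - \<eta>)) \<le> b + c" by (simp add: power2_eq_square algebra_simps)
  moreover have "t * (norm d * (norm d - \<eta>)) = \<bar>b + c\<bar> + 1"
    unfolding t_def using pos by (metis less_irrefl nonzero_eq_divide_eq)
  ultimately show False by simp
qed

lemma convex_below_cone:
  fixes v :: "'a::real_inner"
  assumes "0 \<le> \<eta>"
  shows "convex {(p, s). s \<le> inner v p - c - \<eta> * norm p}"
proof (rule convexI, clarsimp)
  fix p q :: 'a and s t u u' :: real
  assume s: "s \<le> inner v p - c - \<eta> * norm p" and t: "t \<le> inner v q - c - \<eta> * norm q"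
    and u: "0 \<le> u" "0 \<le> u'" "u + u' = 1"
  have "\<eta> * norm (u *\<^sub>R p + u' *\<^sub>R q) \<le> \<eta> * (u * norm p + u' * norm q)"
    using norm_triangle_ineq[of "u *\<^sub>R p" "u' *\<^sub>R q"] u assms by (intro mult_left_mono) auto
  moreover have "u * s + u' * t \<le> u * (inner v p - c - \<eta> * norm p) + u' * (inner v q - c - \<eta> * norm q)"
    using s t u by (intro add_mono mult_left_mono) auto
  moreover have "\<dots> = inner v (u *\<^sub>R p + u' *\<^sub>R q) - (u + u') * c - \<eta> * (u * norm p + u' * norm q)"
    by (simp add: inner_add_right algebra_simps)
  ultimately show "u * s + u' * t \<le> inner v (u *\<^sub>R p + u' *\<^sub>R q) - c - \<eta> * norm (u *\<^sub>R p + u' *\<^sub>R q)"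
    using u(3) by simp
qed

lemma minorant_set_hausdorff_half:
  assumes g': "conj_bounded g' \<mu>'" and \<eta>: "0 \<le> \<eta>"
    and close: "\<And>p. g p \<le> g' p + \<eta> * (1 + norm p)"
    and e: "(v, r) \<in> minorant_set g \<mu>"
  shows "\<exists>e'\<in>minorant_set g' \<mu>'. dist (v, r) e' \<le> 2 * \<eta> + \<bar>\<mu> - \<mu>'\<bar>"
proof -
  have below: "s \<le> g' p" if "s \<le> inner v p - (r + \<eta>) - \<eta> * norm p" for p s
    using that minorant_set_le[OF e, of p] close[of p] by (simp add: algebra_simps)
  define T where "T = {(p, s). s \<le> inner v p - (r + \<eta>) - \<eta> * norm p}"
  have "convex_on UNIV g'" using g' unfolding conj_bounded_def by blast
  moreover have "convex T" "(0, - (r + \<eta>)) \<in> T" unfolding T_def using convex_below_cone[OF \<eta>] by auto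
  ultimately obtain a b where ab: "\<And>p. inner a p + b \<le> g' p" "\<And>p s. (p, s) \<in> T \<Longrightarrow> s \<le> inner a p + b"
    using separating_affine_minorant[of g' T] below unfolding T_def by blast
  have cone: "inner v p - (r + \<eta>) - \<eta> * norm p \<le> inner a p + b" for p
    using ab(2) unfolding T_def by simp
  have va: "norm (v - a) \<le> \<eta>" by (rule affine_above_cone_slope[OF \<eta> cone])
  have "- (r + \<eta>) \<le> b" using cone[of 0] by simp
  then have m: "affine_minorant g' a (r + \<eta>)"
    unfolding affine_minorant_def using ab(1) by (metis add_le_cancel_left diff_conv_add_uminus order_trans)
  then have "affine_minorant g' a (min (r + \<eta>) \<mu>')"
    using g' unfolding conj_bounded_def by (cases "r + \<eta> \<le> \<mu>'") (auto simp: min_def)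
  then have "(a, min (r + \<eta>) \<mu>') \<in> minorant_set g' \<mu>'" unfolding minorant_set_def by simp
  moreover have "\<bar>r - min (r + \<eta>) \<mu>'\<bar> \<le> \<eta> + \<bar>\<mu> - \<mu>'\<bar>"
    using e \<eta> unfolding minorant_set_def by (auto simp: min_def)
  then have "dist (v, r) (a, min (r + \<eta>) \<mu>') \<le> 2 * \<eta> + \<bar>\<mu> - \<mu>'\<bar>"
    using va norm_Pair_le[of "v - a" "r - min (r + \<eta>) \<mu>'"] by (simp add: dist_norm)
  ultimately show ?thesis by blast
qed

lemma minorant_set_hausdorff:
  assumes "conj_bounded g \<mu>" "conj_bounded g' \<mu>'" "0 \<le> \<eta>"
    and "\<And>p. \<bar>g p - g' p\<bar> \<le> \<eta> * (1 + norm p)"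
  shows "hausdorff_close (minorant_set g \<mu>) (minorant_set g' \<mu>') (2 * \<eta> + \<bar>\<mu> - \<mu>'\<bar>)"
proof -
  have c: "g p \<le> g' p + \<eta> * (1 + norm p)" "g' p \<le> g p + \<eta> * (1 + norm p)" for p
    using assms(4)[of p] by (simp_all add: abs_le_iff)
  have "\<exists>l\<in>minorant_set g' \<mu>'. dist k l \<le> 2 * \<eta> + \<bar>\<mu> - \<mu>'\<bar>" if "k \<in> minorant_set g \<mu>" for k
    using minorant_set_hausdorff_half[OF assms(2,3) c(1), of "fst k" "snd k"] that by simp
  moreover have "\<exists>k\<in>minorant_set g \<mu>. dist l k \<le> 2 * \<eta> + \<bar>\<mu> - \<mu>'\<bar>" if "l \<in> minorant_set g' \<mu>'" for l
    using minorant_set_hausdorff_half[OF assms(1,3) c(2), where v="fst l" and r="snd l" and \<mu>=\<mu>'] that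
    by (simp add: abs_minus_commute)
  ultimately show ?thesis unfolding hausdorff_close_def by (metis dist_commute)
qed

lemma conj_bounded_if_domHstar_bounded:
  fixes H :: "real \<Rightarrow> 'a::euclidean_space \<Rightarrow> 'a \<Rightarrow> real"
  assumes "convex_on UNIV (H t x)"
    and dom: "\<forall>v\<in>domHstar H t x. norm v \<le> \<mu> \<and> \<bar>real_of_ereal (Hstar H t x v)\<bar> \<le> \<mu>"
  shows "conj_bounded (H t x) \<mu>"
  unfolding conj_bounded_def
proof (intro conjI[OF assms(1)] allI impI)
  fix v r assume "affine_minorant (H t x) v r"
  then have le: "Hstar H t x v \<le> ereal r"
    unfolding Hstar_def affine_minorant_def by (intro SUP_least) (simp add: algebra_simps)
  have ge: "ereal (inner v p - H t x p) \<le> Hstar H t x v" for p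
    unfolding Hstar_def by (rule SUP_upper) simp
  obtain h where h: "Hstar H t x v = ereal h"
    using le ge[of 0] by (cases "Hstar H t x v") auto
  then have "v \<in> domHstar H t x" unfolding domHstar_def by simp
  then have bounds: "norm v \<le> \<mu>" "\<bar>h\<bar> \<le> \<mu>" using dom h by auto
  have "inner v p - \<mu> \<le> H t x p" for p
    using ge[of p] h bounds(2) by simp
  moreover have "- \<mu> \<le> r" using le h bounds(2) by simp
  ultimately show "norm v \<le> \<mu> \<and> - \<mu> \<le> r \<and> affine_minorant (H t x) v \<mu>"
    unfolding affine_minorant_def using bounds(1) by blast
qed

section \<open>A continuous selection of affine minorants\<close>

text \<open>The unit ball is stretched over \<open>cball 0 (2 * \<mu>) \<supseteq> minorant_set g \<mu>\<close>; \<open>near_part\<close> makes every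
  minorant the selected one at some parameter, and \<open>steiner_point\<close> makes the choice Lipschitz.\<close>

definition conj_selection :: "('a::euclidean_space \<Rightarrow> real) \<Rightarrow> real \<Rightarrow> 'a \<times> real \<Rightarrow> 'a \<times> real" where
  "conj_selection g \<mu> a = steiner_point (near_part (minorant_set g \<mu>) ((2 * \<mu>) *\<^sub>R a))"

lemma
  assumes "conj_bounded g \<mu>"
  shows compact_near_minorants: "compact (near_part (minorant_set g \<mu>) y)"
    and convex_near_minorants: "convex (near_part (minorant_set g \<mu>) y)"
    and near_minorants_nonempty: "near_part (minorant_set g \<mu>) y \<noteq> {}"
  by (intro compact_near_part convex_near_part near_part_nonempty
      compact_minorant_set convex_minorant_set minorant_set_nonempty assms)+

lemma conj_selection_mem:
  assumes "conj_bounded g \<mu>"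
  shows "conj_selection g \<mu> a \<in> minorant_set g \<mu>"
proof -
  have "conj_selection g \<mu> a \<in> near_part (minorant_set g \<mu>) ((2 * \<mu>) *\<^sub>R a)"
    unfolding conj_selection_def
    by (intro steiner_point_mem compact_near_minorants convex_near_minorants near_minorants_nonempty assms)
  then show ?thesis using near_part_subset by blast
qed

lemma conj_selection_surj:
  assumes "conj_bounded g \<mu>" "e \<in> minorant_set g \<mu>"
  obtains a where "a \<in> cball 0 1" "conj_selection g \<mu> a = e"
proof -
  have sel: "conj_selection g \<mu> a = e" if "(2 * \<mu>) *\<^sub>R a = e" for a
    using that assms(2) by (simp add: conj_selection_def near_part_of_mem steiner_point_singleton)
  have e: "norm e \<le> 2 * \<mu>" using minorant_set_subset_cball[OF assms(1)] assms(2) by auto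
  show ?thesis
  proof (cases "\<mu> = 0")
    case True
    then show ?thesis using that[of 0] sel[of 0] e by simp
  next
    case False
    then have "0 < \<mu>" using conj_bounded_nonneg[OF assms(1)] by simp
    then show ?thesis using that[of "(1 / (2 * \<mu>)) *\<^sub>R e"] sel e by (simp add: divide_le_eq)
  qed
qed

lemma SUP_conj_selection:
  assumes "conj_bounded g \<mu>"
  shows "ereal (g p)
    = (SUP a\<in>cball 0 1. ereal (inner p (fst (conj_selection g \<mu> a)) - snd (conj_selection g \<mu> a)))"
proof (rule antisym)
  obtain v r where vr: "(v, r) \<in> minorant_set g \<mu>" "inner v p - r = g p"
    using minorant_set_attains[OF assms] .
  obtain a where a: "a \<in> cball 0 1" "conj_selection g \<mu> a = (v, r)"
    using conj_selection_surj[OF assms vr(1)] .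
  show "ereal (g p) \<le> (SUP a\<in>cball 0 1. ereal (inner p (fst (conj_selection g \<mu> a)) - snd (conj_selection g \<mu> a)))"
    using SUP_upper[OF a(1), of "\<lambda>a. ereal (inner p (fst (conj_selection g \<mu> a)) - snd (conj_selection g \<mu> a))"]
      vr(2) a(2) by (simp add: inner_commute)
  have "inner p (fst (conj_selection g \<mu> a)) - snd (conj_selection g \<mu> a) \<le> g p" for a
    using minorant_set_le[of "fst (conj_selection g \<mu> a)" "snd (conj_selection g \<mu> a)" g \<mu> p]
      conj_selection_mem[OF assms, of a] by (simp add: inner_commute)
  then show "(SUP a\<in>cball 0 1. ereal (inner p (fst (conj_selection g \<mu> a)) - snd (conj_selection g \<mu> a)))
      \<le> ereal (g p)"
    by (intro SUP_least) simp
qed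

lemma norm_conj_selection_le:
  assumes "conj_bounded g \<mu>"
  shows "norm (fst (conj_selection g \<mu> a)) + \<bar>snd (conj_selection g \<mu> a)\<bar> \<le> 2 * \<mu>"
  using minorant_set_bounds[OF assms, of "fst (conj_selection g \<mu> a)" "snd (conj_selection g \<mu> a)"]
    conj_selection_mem[OF assms, of a] by simp

lemma conj_selection_lipschitz:
  obtains C :: real where "0 \<le> C"
    and "\<And>(g :: 'a::euclidean_space \<Rightarrow> real) \<mu> g' \<mu>' \<eta> a a'. conj_bounded g \<mu> \<Longrightarrow> conj_bounded g' \<mu>' \<Longrightarrow>
      0 \<le> \<eta> \<Longrightarrow> (\<And>p. \<bar>g p - g' p\<bar> \<le> \<eta> * (1 + norm p)) \<Longrightarrow> norm a' \<le> 1 \<Longrightarrow>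
      dist (conj_selection g \<mu> a) (conj_selection g' \<mu>' a') \<le> C * (\<eta> + \<bar>\<mu> - \<mu>'\<bar> + \<mu> * dist a a')"
proof -
  obtain C where C: "0 \<le> C"
    "\<And>(K :: ('a \<times> real) set) L d. K \<noteq> {} \<Longrightarrow> L \<noteq> {} \<Longrightarrow> bounded K \<Longrightarrow> bounded L \<Longrightarrow>
      hausdorff_close K L d \<Longrightarrow> dist (steiner_point K) (steiner_point L) \<le> C * d"
    using steiner_point_lipschitz by blast
  show ?thesis
  proof (rule that[of "38 * C"])
    show "0 \<le> 38 * C" using C(1) by simp
    fix g g' :: "'a \<Rightarrow> real" and \<mu> \<mu>' \<eta> and a a' :: "'a \<times> real"
    assume g: "conj_bounded g \<mu>" and g': "conj_bounded g' \<mu>'" and \<eta>: "0 \<le> \<eta>"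
      and close: "\<And>p. \<bar>g p - g' p\<bar> \<le> \<eta> * (1 + norm p)" and a': "norm a' \<le> 1"
    define d where "d = 2 * \<eta> + 2 * \<bar>\<mu> - \<mu>'\<bar> + 2 * \<mu> * dist a a'"
    have "2 * \<eta> + \<bar>\<mu> - \<mu>'\<bar> \<le> d" using conj_bounded_nonneg[OF g] unfolding d_def by simp
    then have "hausdorff_close (minorant_set g \<mu>) (minorant_set g' \<mu>') d"
      by (rule hausdorff_close_mono[OF minorant_set_hausdorff[OF g g' \<eta> close]])
    moreover have "dist ((2 * \<mu>) *\<^sub>R a) ((2 * \<mu>') *\<^sub>R a') \<le> d"
    proof -
      have "dist ((2 * \<mu>) *\<^sub>R a) ((2 * \<mu>') *\<^sub>R a') = norm ((2 * \<mu>) *\<^sub>R (a - a') + (2 * (\<mu> - \<mu>')) *\<^sub>R a')"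
        by (simp add: dist_norm algebra_simps)
      also have "\<dots> \<le> norm ((2 * \<mu>) *\<^sub>R (a - a')) + norm ((2 * (\<mu> - \<mu>')) *\<^sub>R a')"
        by (rule norm_triangle_ineq)
      also have "\<dots> \<le> 2 * \<mu> * dist a a' + 2 * \<bar>\<mu> - \<mu>'\<bar>"
      proof -
        have "\<bar>2 * \<mu> - 2 * \<mu>'\<bar> = 2 * \<bar>\<mu> - \<mu>'\<bar>" by (simp add: abs_if)
        then show ?thesis
          using conj_bounded_nonneg[OF g] mult_left_mono[OF a', of "2 * \<bar>\<mu> - \<mu>'\<bar>"]
          by (simp add: dist_norm)
      qed
      finally show ?thesis using \<eta> unfolding d_def by simp
    qed
    ultimately have "hausdorff_close (near_part (minorant_set g \<mu>) ((2 * \<mu>) *\<^sub>R a))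
        (near_part (minorant_set g' \<mu>') ((2 * \<mu>') *\<^sub>R a')) (19 * d)"
      by (intro near_part_hausdorff compact_minorant_set convex_minorant_set minorant_set_nonempty g g')
    then have "dist (conj_selection g \<mu> a) (conj_selection g' \<mu>' a') \<le> C * (19 * d)"
      unfolding conj_selection_def
      by (intro C(2) near_minorants_nonempty g g' compact_imp_bounded compact_near_minorants)
    then show "dist (conj_selection g \<mu> a) (conj_selection g' \<mu>' a')
        \<le> 38 * C * (\<eta> + \<bar>\<mu> - \<mu>'\<bar> + \<mu> * dist a a')"
      by (simp add: d_def algebra_simps)
  qed
qed

text \<open>By \<open>conj_bounded_scaleR_diff\<close>, conjugate bounds make \<open>g\<close> and \<open>g'\<close> almost positively homogeneous,
  so closeness on a large enough ball propagates along rays.\<close>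

lemma conj_bounded_diff_le_weighted:
  assumes g: "conj_bounded g \<mu>" and g': "conj_bounded g' \<mu>'" and M: "\<mu> \<le> M" "\<mu>' \<le> M"
    and e: "0 < e" "e + 2 * M \<le> e * R"
    and ball: "\<And>p. norm p \<le> R \<Longrightarrow> \<bar>g p - g' p\<bar> \<le> e"
  shows "\<bar>g p - g' p\<bar> \<le> e * (1 + norm p)"
proof (cases "norm p \<le> R")
  case True
  have "e * 1 \<le> e * (1 + norm p)" using e(1) by (intro mult_left_mono) auto
  then show ?thesis using ball[OF True] by simp
next
  case False
  have M0: "0 \<le> M" using conj_bounded_nonneg[OF g] M(1) by linarith
  then have "1 \<le> R" using e by (smt (verit) mult_le_cancel_left1)
  then have p: "R < norm p" "0 < norm p" using False by linarith+
  define s where "s = norm p / R"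
  define w where "w = (R / norm p) *\<^sub>R p"
  have s: "1 \<le> s" unfolding s_def using p \<open>1 \<le> R\<close> by simp
  have sw: "s *\<^sub>R w = p" unfolding s_def w_def using p \<open>1 \<le> R\<close> by simp
  have "norm w = R" unfolding w_def using p \<open>1 \<le> R\<close> by simp
  then have "\<bar>s * g w - s * g' w\<bar> \<le> s * e"
    using ball[of w] s by (simp add: abs_mult flip: right_diff_distrib)
  moreover have "\<bar>g (s *\<^sub>R w) - s * g w\<bar> \<le> (s - 1) * M" "\<bar>g' (s *\<^sub>R w) - s * g' w\<bar> \<le> (s - 1) * M"
    using conj_bounded_scaleR_diff[OF g s, of w] conj_bounded_scaleR_diff[OF g' s, of w]
      mult_left_mono[OF M(1), of "s - 1"] mult_left_mono[OF M(2), of "s - 1"] s by linarith+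
  moreover have "\<bar>g (s *\<^sub>R w) - g' (s *\<^sub>R w)\<bar>
      \<le> \<bar>g (s *\<^sub>R w) - s * g w\<bar> + \<bar>s * g w - s * g' w\<bar> + \<bar>g' (s *\<^sub>R w) - s * g' w\<bar>"
    by arith
  ultimately have "\<bar>g p - g' p\<bar> \<le> s * (e + 2 * M)"
    unfolding sw[symmetric] using M0 by (simp add: algebra_simps)
  also have "\<dots> \<le> s * (e * R)" using e(2) s by (intro mult_left_mono) auto
  also have "\<dots> = e * norm p" unfolding s_def using \<open>1 \<le> R\<close> by simp
  also have "\<dots> \<le> e * (1 + norm p)" using e(1) by simp
  finally show ?thesis .
qed

lemma conj_bounded_family_locally_close:
  fixes G :: "'u::heine_borel \<Rightarrow> 'a::euclidean_space \<Rightarrow> real" and \<mu> :: "'u \<Rightarrow> real"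
  assumes S: "closed S" and G: "continuous_on (S \<times> UNIV) (\<lambda>(u, p). G u p)"
    and \<mu>: "continuous_on S \<mu>" and bounded: "\<And>u. u \<in> S \<Longrightarrow> conj_bounded (G u) (\<mu> u)"
    and u: "u \<in> S" and e: "0 < e"
  shows "\<exists>d>0. \<forall>u'\<in>S. dist u' u < d \<longrightarrow>
    (\<forall>p. \<bar>G u' p - G u p\<bar> \<le> e * (1 + norm p)) \<and> \<bar>\<mu> u' - \<mu> u\<bar> \<le> e"
proof -
  have "0 < min e 1" using e by simp
  then obtain d\<^sub>1 where d\<^sub>1: "0 < d\<^sub>1" "\<And>u'. u' \<in> S \<Longrightarrow> dist u' u < d\<^sub>1 \<Longrightarrow> dist (\<mu> u') (\<mu> u) < min e 1"
    using \<mu> u unfolding continuous_on_iff by blast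
  define M where "M = \<mu> u + 1"
  define R where "R = (e + 2 * M) / e"
  define C where "C = (S \<inter> cball u 1) \<times> cball (0::'a) R"
  have "compact C" unfolding C_def using S by (intro compact_Times closed_Int_compact) auto
  moreover have "continuous_on C (\<lambda>(u, p). G u p)" by (rule continuous_on_subset[OF G]) (auto simp: C_def)
  ultimately obtain d\<^sub>2 where d\<^sub>2: "0 < d\<^sub>2"
      "\<And>x x'. x \<in> C \<Longrightarrow> x' \<in> C \<Longrightarrow> dist x' x < d\<^sub>2 \<Longrightarrow> dist ((\<lambda>(u, p). G u p) x') ((\<lambda>(u, p). G u p) x) < e"
    using compact_uniformly_continuous e unfolding uniformly_continuous_on_def by metis
  show ?thesis
  proof (intro exI[of _ "min (min d\<^sub>1 d\<^sub>2) 1"] conjI ballI impI allI)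
    show "0 < min (min d\<^sub>1 d\<^sub>2) 1" using d\<^sub>1(1) d\<^sub>2(1) by simp
    fix u' assume u': "u' \<in> S" and d: "dist u' u < min (min d\<^sub>1 d\<^sub>2) 1"
    have \<mu>u': "\<bar>\<mu> u' - \<mu> u\<bar> < min e 1" using d\<^sub>1(2)[OF u'] d by (simp add: dist_real_def)
    then show "\<bar>\<mu> u' - \<mu> u\<bar> \<le> e" by simp
    have ball: "\<bar>G u' p - G u p\<bar> \<le> e" if "norm p \<le> R" for p
    proof -
      have "(u', p) \<in> C" "(u, p) \<in> C" using u u' d that by (auto simp: C_def dist_commute)
      moreover have "dist (u', p) (u, p) < d\<^sub>2" using d by (simp add: dist_Pair_Pair)
      ultimately show ?thesis using d\<^sub>2(2)[of "(u, p)" "(u', p)"] by (simp add: dist_real_def)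
    qed
    have eR: "e + 2 * M \<le> e * R" unfolding R_def using e by simp
    have M: "\<mu> u' \<le> M" "\<mu> u \<le> M" using \<mu>u' unfolding M_def by auto
    show "\<bar>G u' p - G u p\<bar> \<le> e * (1 + norm p)" for p
      by (rule conj_bounded_diff_le_weighted[OF bounded[OF u'] bounded[OF u] M e(1) eR ball])
  qed
qed

lemma continuous_on_conj_selection:
  fixes G :: "'u::metric_space \<Rightarrow> 'a::euclidean_space \<Rightarrow> real" and \<mu> :: "'u \<Rightarrow> real"
  assumes bounded: "\<And>u. u \<in> S \<Longrightarrow> conj_bounded (G u) (\<mu> u)"
    and close: "\<And>u e. u \<in> S \<Longrightarrow> 0 < e \<Longrightarrow> \<exists>d>0. \<forall>u'\<in>S. dist u' u < d \<longrightarrow>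
      (\<forall>p. \<bar>G u' p - G u p\<bar> \<le> e * (1 + norm p)) \<and> \<bar>\<mu> u' - \<mu> u\<bar> \<le> e"
  shows "continuous_on (S \<times> cball 0 1) (\<lambda>(u, a). conj_selection (G u) (\<mu> u) a)"
  unfolding continuous_on_iff
proof (intro ballI allI impI)
  fix z :: "'u \<times> 'a \<times> real" and e :: real assume z: "z \<in> S \<times> cball 0 1" and e: "0 < e"
  obtain u a where z_eq: "z = (u, a)" by (cases z)
  have u: "u \<in> S" using z unfolding z_eq by simp
  obtain C where C: "0 \<le> C"
    "\<And>(g :: 'a \<Rightarrow> real) \<mu> g' \<mu>' \<eta> a a'. conj_bounded g \<mu> \<Longrightarrow> conj_bounded g' \<mu>' \<Longrightarrow> 0 \<le> \<eta> \<Longrightarrow>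
      (\<And>p. \<bar>g p - g' p\<bar> \<le> \<eta> * (1 + norm p)) \<Longrightarrow> norm a' \<le> 1 \<Longrightarrow>
      dist (conj_selection g \<mu> a) (conj_selection g' \<mu>' a') \<le> C * (\<eta> + \<bar>\<mu> - \<mu>'\<bar> + \<mu> * dist a a')"
    using conj_selection_lipschitz by blast
  define \<epsilon> where "\<epsilon> = e / (3 * C + 1)"
  have \<epsilon>: "0 < \<epsilon>" "3 * C * \<epsilon> < e" unfolding \<epsilon>_def using e C(1) by (auto simp: field_simps)
  obtain d where d: "0 < d" "\<And>u'. u' \<in> S \<Longrightarrow> dist u' u < d \<Longrightarrow>
      (\<forall>p. \<bar>G u' p - G u p\<bar> \<le> \<epsilon> * (1 + norm p)) \<and> \<bar>\<mu> u' - \<mu> u\<bar> \<le> \<epsilon>"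
    using close[OF u \<epsilon>(1)] by blast
  have \<mu>: "0 \<le> \<mu> u" using conj_bounded_nonneg[OF bounded[OF u]] .
  show "\<exists>\<delta>>0. \<forall>z'\<in>S \<times> cball 0 1. dist z' z < \<delta> \<longrightarrow>
      dist ((\<lambda>(u, a). conj_selection (G u) (\<mu> u) a) z') ((\<lambda>(u, a). conj_selection (G u) (\<mu> u) a) z) < e"
  proof (intro exI[of _ "min d (\<epsilon> / (\<mu> u + 1))"] conjI ballI impI)
  show "0 < min d (\<epsilon> / (\<mu> u + 1))" using d(1) \<epsilon>(1) \<mu> by simp
  fix z' :: "'u \<times> 'a \<times> real" assume z': "z' \<in> S \<times> cball 0 1" and dz: "dist z' z < min d (\<epsilon> / (\<mu> u + 1))"
  obtain u' a' where z'_eq: "z' = (u', a')" by (cases z')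
  have u': "u' \<in> S" "norm a' \<le> 1" using z' unfolding z'_eq by auto
  have "dist u' u < d" "dist a a' < \<epsilon> / (\<mu> u + 1)"
    using dz dist_fst_le[of z' z] dist_snd_le[of z' z] unfolding z'_eq z_eq
    by (auto simp: dist_commute)
  then have close': "\<And>p. \<bar>G u p - G u' p\<bar> \<le> \<epsilon> * (1 + norm p)" "\<bar>\<mu> u - \<mu> u'\<bar> \<le> \<epsilon>"
    and "dist a a' + \<mu> u * dist a a' < \<epsilon>"
    using d(2)[OF u'(1)] \<mu> by (auto simp: abs_minus_commute field_simps)
  then have "\<mu> u * dist a a' \<le> \<epsilon>" using zero_le_dist[of a a'] by linarith
  then have "dist (conj_selection (G u) (\<mu> u) a) (conj_selection (G u') (\<mu> u') a') \<le> C * (3 * \<epsilon>)"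
    using C(2)[OF bounded[OF u] bounded[OF u'(1)] less_imp_le[OF \<epsilon>(1)] close'(1) u'(2)] close'(2) C(1)
    by (smt (verit) mult_left_mono)
  then show "dist ((\<lambda>(u, a). conj_selection (G u) (\<mu> u) a) z') ((\<lambda>(u, a). conj_selection (G u) (\<mu> u) a) z) < e"
    unfolding z'_eq z_eq using \<epsilon>(2) by (simp add: dist_commute)
  qed
qed

section \<open>The representation of the Hamiltonian\<close>

lemma int_nonneg_add: "int_nonneg T k \<Longrightarrow> int_nonneg T k' \<Longrightarrow> int_nonneg T (\<lambda>t. k t + k' t)"
  unfolding int_nonneg_def by (auto intro: integrable_add)

lemma int_nonneg_cmult: "int_nonneg T k \<Longrightarrow> 0 \<le> c \<Longrightarrow> int_nonneg T (\<lambda>t. c * k t)"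
  unfolding int_nonneg_def using integrable_cmul[of k "{0..T}" c] by auto

lemma norm_fst_plus_norm_snd_le: "norm (fst z) + norm (snd z) \<le> 2 * norm z"
  using norm_fst_le[of "fst z" "snd z"] norm_snd_le[of "snd z" "fst z"] by simp

lemma continuous_on_hamiltonian_selection:
  fixes H :: "real \<Rightarrow> 'a::euclidean_space \<Rightarrow> 'a \<Rightarrow> real" and lam :: "real \<Rightarrow> 'a \<Rightarrow> real"
  assumes "H1 T H" and lam: "continuous_on ({0..T} \<times> UNIV) (\<lambda>(t, x). lam t x)"
    and bounded: "\<forall>t\<in>{0..T}. \<forall>x. conj_bounded (H t x) (lam t x)"
  shows "continuous_on ({0..T} \<times> UNIV \<times> cball 0 1) (\<lambda>(t, x, a). fst (conj_selection (H t x) (lam t x) a))"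
    and "continuous_on ({0..T} \<times> UNIV \<times> cball 0 1) (\<lambda>(t, x, a). snd (conj_selection (H t x) (lam t x) a))"
proof -
  let ?S = "{0..T} \<times> (UNIV :: 'a set)"
  have "continuous_on (?S \<times> UNIV) (\<lambda>((t, x), p). (t, x, p))"
    by (auto intro!: continuous_intros simp: case_prod_beta)
  moreover have "(\<lambda>((t, x), p). (t, x, p)) ` (?S \<times> UNIV) \<subseteq> {0..T} \<times> UNIV \<times> UNIV" by auto
  ultimately have "continuous_on (?S \<times> UNIV) ((\<lambda>(t, x, p). H t x p) \<circ> (\<lambda>((t, x), p). (t, x, p)))"
    using assms(1) unfolding H1_def by (blast intro: continuous_on_compose continuous_on_subset)
  then have H: "continuous_on (?S \<times> UNIV) (\<lambda>(u, p). case_prod H u p)"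
    by (simp add: o_def case_prod_beta)
  have "continuous_on (?S \<times> cball 0 1) (\<lambda>(u, a). conj_selection (case_prod H u) (case_prod lam u) a)"
  proof (rule continuous_on_conj_selection)
    show bounded': "conj_bounded (case_prod H u) (case_prod lam u)" if "u \<in> ?S" for u
      using bounded that by auto
    show "\<exists>d>0. \<forall>u'\<in>?S. dist u' u < d \<longrightarrow>
        (\<forall>p. \<bar>case_prod H u' p - case_prod H u p\<bar> \<le> e * (1 + norm p)) \<and>
        \<bar>case_prod lam u' - case_prod lam u\<bar> \<le> e" if "u \<in> ?S" "0 < e" for u e
      using conj_bounded_family_locally_close[OF closed_Times[OF closed_atLeastAtMost closed_UNIV] H _ bounded' that]
        lam by (simp add: case_prod_beta')
  qed
  moreover have "continuous_on ({0..T} \<times> UNIV \<times> cball 0 1) (\<lambda>(t, x, a). ((t, x), a))"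
    by (auto intro!: continuous_intros simp: case_prod_beta)
  moreover have "(\<lambda>(t, x, a). ((t, x), a)) ` ({0..T} \<times> UNIV \<times> cball 0 1) \<subseteq> ?S \<times> cball 0 1" by auto
  ultimately have "continuous_on ({0..T} \<times> UNIV \<times> cball 0 1)
      ((\<lambda>(u, a). conj_selection (case_prod H u) (case_prod lam u) a) \<circ> (\<lambda>(t, x, a). ((t, x), a)))"
    by (blast intro: continuous_on_compose continuous_on_subset)
  then have "continuous_on ({0..T} \<times> UNIV \<times> cball 0 1) (\<lambda>(t, x, a). conj_selection (H t x) (lam t x) a)"
    by (simp add: o_def case_prod_beta)
  from continuous_on_fst[OF this] continuous_on_snd[OF this]
  show "continuous_on ({0..T} \<times> UNIV \<times> cball 0 1) (\<lambda>(t, x, a). fst (conj_selection (H t x) (lam t x) a))"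
    "continuous_on ({0..T} \<times> UNIV \<times> cball 0 1) (\<lambda>(t, x, a). snd (conj_selection (H t x) (lam t x) a))"
    by (simp_all add: case_prod_beta)
qed

lemma lipschitz_hamiltonian_selection:
  fixes H :: "real \<Rightarrow> 'a::euclidean_space \<Rightarrow> 'a \<Rightarrow> real" and lam :: "real \<Rightarrow> 'a \<Rightarrow> real"
  assumes bounded: "\<forall>t\<in>{0..T}. \<forall>x. conj_bounded (H t x) (lam t x)" and "H5 T H"
    and lam: "\<forall>R\<ge>0. \<exists>\<zeta>. int_nonneg T \<zeta> \<and> (AE t in lebesgue. t \<in> {0..T} \<longrightarrow>
      (\<forall>x\<in>cball 0 R. \<forall>y\<in>cball 0 R. \<bar>lam t x - lam t y\<bar> \<le> \<zeta> t * norm (x - y)))"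
    and "0 \<le> R"
  shows "\<exists>K. int_nonneg T K \<and> (AE t in lebesgue. t \<in> {0..T} \<longrightarrow>
    (\<forall>x\<in>cball 0 R. \<forall>y\<in>cball 0 R. \<forall>a\<in>cball 0 1.
       norm (fst (conj_selection (H t x) (lam t x) a) - fst (conj_selection (H t y) (lam t y) a))
       + \<bar>snd (conj_selection (H t x) (lam t x) a) - snd (conj_selection (H t y) (lam t y) a)\<bar>
       \<le> K t * norm (x - y)))"
    (is "\<exists>K. _ \<and> (AE t in lebesgue. _ \<longrightarrow> (\<forall>x\<in>_. \<forall>y\<in>_. \<forall>a\<in>_. ?diff t x y a \<le> K t * _))")
proof -
  obtain k where k: "int_nonneg T k" and kAE: "AE t in lebesgue. t \<in> {0..T} \<longrightarrow>
      (\<forall>x\<in>cball 0 R. \<forall>y\<in>cball 0 R. \<forall>p. \<bar>H t x p - H t y p\<bar> \<le> k t * (1 + norm p) * norm (x - y))"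
    using assms(2,4) unfolding H5_def by blast
  obtain \<zeta> where \<zeta>: "int_nonneg T \<zeta>" and \<zeta>AE: "AE t in lebesgue. t \<in> {0..T} \<longrightarrow>
      (\<forall>x\<in>cball 0 R. \<forall>y\<in>cball 0 R. \<bar>lam t x - lam t y\<bar> \<le> \<zeta> t * norm (x - y))"
    using lam assms(4) by blast
  obtain C where C: "0 \<le> C"
    "\<And>(g :: 'a \<Rightarrow> real) \<mu> g' \<mu>' \<eta> a a'. conj_bounded g \<mu> \<Longrightarrow> conj_bounded g' \<mu>' \<Longrightarrow> 0 \<le> \<eta> \<Longrightarrow>
      (\<And>p. \<bar>g p - g' p\<bar> \<le> \<eta> * (1 + norm p)) \<Longrightarrow> norm a' \<le> 1 \<Longrightarrow>
      dist (conj_selection g \<mu> a) (conj_selection g' \<mu>' a') \<le> C * (\<eta> + \<bar>\<mu> - \<mu>'\<bar> + \<mu> * dist a a')"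
    using conj_selection_lipschitz by blast
  have "AE t in lebesgue. t \<in> {0..T} \<longrightarrow> (\<forall>x\<in>cball 0 R. \<forall>y\<in>cball 0 R. \<forall>a\<in>cball 0 1.
      ?diff t x y a \<le> 2 * C * (k t + \<zeta> t) * norm (x - y))"
    using kAE \<zeta>AE
  proof eventually_elim
    case (elim t)
    show ?case
    proof (intro impI ballI)
      fix x y a assume t: "t \<in> {0..T}" and xy: "x \<in> cball (0::'a) R" "y \<in> cball (0::'a) R"
        and a: "a \<in> cball (0::'a \<times> real) 1"
      have "0 \<le> k t" using k t unfolding int_nonneg_def by blast
      then have "dist (conj_selection (H t x) (lam t x) a) (conj_selection (H t y) (lam t y) a)
          \<le> C * (k t * norm (x - y) + \<bar>lam t x - lam t y\<bar> + lam t x * dist a a)"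
        using elim(1) t xy a bounded by (intro C(2)) (auto simp: ac_simps)
      also have "\<dots> \<le> C * ((k t + \<zeta> t) * norm (x - y))"
        using elim(2) t xy C(1) by (intro mult_left_mono) (auto simp: algebra_simps)
      finally show "?diff t x y a \<le> 2 * C * (k t + \<zeta> t) * norm (x - y)"
        using norm_fst_plus_norm_snd_le[of "conj_selection (H t x) (lam t x) a - conj_selection (H t y) (lam t y) a"]
        by (simp add: dist_norm)
    qed
  qed
  moreover have "int_nonneg T (\<lambda>t. 2 * C * (k t + \<zeta> t))"
    using C(1) by (intro int_nonneg_cmult int_nonneg_add k \<zeta>) simp
  ultimately show ?thesis by blast
qed

lemma growth_hamiltonian_selection:
  fixes H :: "real \<Rightarrow> 'a::euclidean_space \<Rightarrow> 'a \<Rightarrow> real" and lam :: "real \<Rightarrow> 'a \<Rightarrow> real"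
  assumes bounded: "\<forall>t\<in>{0..T}. \<forall>x. conj_bounded (H t x) (lam t x)"
    and lam: "\<exists>\<theta>. int_nonneg T \<theta> \<and> (AE t in lebesgue. t \<in> {0..T} \<longrightarrow> (\<forall>x. lam t x \<le> \<theta> t * (1 + norm x)))"
  shows "\<exists>C. int_nonneg T C \<and> (AE t in lebesgue. t \<in> {0..T} \<longrightarrow> (\<forall>x. \<forall>a\<in>cball 0 1.
    norm (fst (conj_selection (H t x) (lam t x) a)) + \<bar>snd (conj_selection (H t x) (lam t x) a)\<bar>
    \<le> C t * (1 + norm x)))"
proof -
  obtain \<theta> where \<theta>: "int_nonneg T \<theta>"
    and \<theta>AE: "AE t in lebesgue. t \<in> {0..T} \<longrightarrow> (\<forall>x. lam t x \<le> \<theta> t * (1 + norm x))"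
    using lam by blast
  have "AE t in lebesgue. t \<in> {0..T} \<longrightarrow> (\<forall>x. \<forall>a\<in>cball 0 1.
    norm (fst (conj_selection (H t x) (lam t x) a)) + \<bar>snd (conj_selection (H t x) (lam t x) a)\<bar>
    \<le> 2 * \<theta> t * (1 + norm x))"
    using \<theta>AE
  proof eventually_elim
    case (elim t)
    show ?case
    proof (intro impI allI ballI)
      fix x a assume t: "t \<in> {0..T}"
      have "norm (fst (conj_selection (H t x) (lam t x) a)) + \<bar>snd (conj_selection (H t x) (lam t x) a)\<bar>
          \<le> 2 * lam t x"
        using norm_conj_selection_le bounded t by blast
      also have "\<dots> \<le> 2 * \<theta> t * (1 + norm x)" using elim t by simp
      finally show "norm (fst (conj_selection (H t x) (lam t x) a)) + \<bar>snd (conj_selection (H t x) (lam t x) a)\<bar>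
          \<le> 2 * \<theta> t * (1 + norm x)" .
    qed
  qed
  moreover have "int_nonneg T (\<lambda>t. 2 * \<theta> t)" by (intro int_nonneg_cmult \<theta>) simp
  ultimately show ?thesis by blast
qed

theorem theorem3p1:
  fixes T :: real and H :: "real \<Rightarrow> 'a::euclidean_space \<Rightarrow> 'a \<Rightarrow> real"
  assumes "condA T H"
  shows "\<exists>(f :: real \<Rightarrow> 'a \<Rightarrow> 'a \<times> real \<Rightarrow> 'a) (l :: real \<Rightarrow> 'a \<Rightarrow> 'a \<times> real \<Rightarrow> real).
    (\<forall>t\<in>{0..T}. \<forall>x p. ereal (H t x p) = (SUP a\<in>cball 0 1. ereal (inner p (f t x a) - l t x a))) \<and>
    continuous_on ({0..T} \<times> UNIV \<times> cball 0 1) (\<lambda>(t, x, a). f t x a) \<and>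
    continuous_on ({0..T} \<times> UNIV \<times> cball 0 1) (\<lambda>(t, x, a). l t x a) \<and>
    (\<forall>R\<ge>0. \<exists>K. int_nonneg T K \<and> (AE t in lebesgue. t \<in> {0..T} \<longrightarrow>
       (\<forall>x\<in>cball 0 R. \<forall>y\<in>cball 0 R. \<forall>a\<in>cball 0 1.
          norm (f t x a - f t y a) + \<bar>l t x a - l t y a\<bar> \<le> K t * norm (x - y)))) \<and>
    (\<exists>C. int_nonneg T C \<and> (AE t in lebesgue. t \<in> {0..T} \<longrightarrow>
       (\<forall>x. \<forall>a\<in>cball 0 1. norm (f t x a) + \<bar>l t x a\<bar> \<le> C t * (1 + norm x))))"
proof -
  obtain lam :: "real \<Rightarrow> 'a \<Rightarrow> real" where
    lam_cont: "continuous_on ({0..T} \<times> UNIV) (\<lambda>(t, x). lam t x)" and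
    lam_dom: "\<forall>t\<in>{0..T}. \<forall>x. \<forall>v\<in>domHstar H t x.
      norm v \<le> lam t x \<and> \<bar>real_of_ereal (Hstar H t x v)\<bar> \<le> lam t x" and
    lam_lip: "\<forall>R\<ge>0. \<exists>\<zeta>. int_nonneg T \<zeta> \<and> (AE t in lebesgue. t \<in> {0..T} \<longrightarrow>
      (\<forall>x\<in>cball 0 R. \<forall>y\<in>cball 0 R. \<bar>lam t x - lam t y\<bar> \<le> \<zeta> t * norm (x - y)))" and
    lam_growth: "\<exists>\<theta>. int_nonneg T \<theta> \<and> (AE t in lebesgue. t \<in> {0..T} \<longrightarrow>
      (\<forall>x. lam t x \<le> \<theta> t * (1 + norm x)))"
    using assms unfolding condA_def by blast
  have H: "H1 T H" "H2 T H" "H5 T H" using assms unfolding condA_def by auto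
  have bounded: "\<forall>t\<in>{0..T}. \<forall>x. conj_bounded (H t x) (lam t x)"
    using H(2) lam_dom unfolding H2_def by (auto intro: conj_bounded_if_domHstar_bounded)
  have "\<forall>t\<in>{0..T}. \<forall>x p. ereal (H t x p) = (SUP a\<in>cball 0 1.
      ereal (inner p (fst (conj_selection (H t x) (lam t x) a)) - snd (conj_selection (H t x) (lam t x) a)))"
    using bounded SUP_conj_selection by blast
  then show ?thesis
    by (intro exI[of _ "\<lambda>t x a. fst (conj_selection (H t x) (lam t x) a)"]
        exI[of _ "\<lambda>t x a. snd (conj_selection (H t x) (lam t x) a)"] conjI
        continuous_on_hamiltonian_selection[OF H(1) lam_cont bounded]
        allI impI lipschitz_hamiltonian_selection[OF bounded H(3) lam_lip]
        growth_hamiltonian_selection[OF bounded lam_growth])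
qed

end
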